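(* Let $d\ge2$ and $f=\frac1n\sum_{i=1}^n f_i$, where each $f_i:\mathbb{R}^d\to\mathbb{R}$ is twice differentiable with $L$-Lipschitz Hessian. Let $\mathcal{B}$ be a multiset of $b$ indices drawn i.i.d. uniformly (with replacement) from $\{1,\dots,n\}$ and $h_{\mathcal{B}}:=\frac1b\sum_{i\in\mathcal{B}}f_i$. Then for all $x,\tilde x\in\mathbb{R}^d$, $$ \mathbb{E}_{\mathcal{B}}\|\mathcal{G}(h_{\mathcal{B}},x,\tilde x)-\nabla f(x)\|^{3/2}\le\Bigl(\frac{L}{\sqrt b}\Bigr)^{3/2}\|x-\tilde x\|^3,\qquad \mathbb{E}_{\mathcal{B}}\|\mathcal{H}(h_{\mathcal{B}},x,\tilde x)-\nabla^2 f(x)\|^{3}\le C\Bigl(\frac{\sqrt{\log d}\,L}{\sqrt b}\Bigr)^{3}\|x-\tilde x\|^3, $$ with $C$ an absolute numerical constant; i.e. $h_{\mathcal{B}}$ satisfies the Lipschitz similarity condition with $\delta_1=L/\sqrt b$ and $\delta_2=\mathcal{O}(\sqrt{\log d}\,L/\sqrt b)$.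
   Context: $\|\cdot\|$ is the Euclidean norm on vectors and the spectral norm on symmetric matrices. For twice differentiable $h$ and $x,\tilde x\in\mathbb{R}^d$ define $\mathcal{G}(h,x,\tilde x):=\nabla h(x)-\nabla h(\tilde x)+\nabla f(\tilde x)+(\nabla^2 f(\tilde x)-\nabla^2 h(\tilde x))(x-\tilde x)$ and $\mathcal{H}(h,x,\tilde x):=\nabla^2 h(x)-\nabla^2 h(\tilde x)+\nabla^2 f(\tilde x)$. A (random) helper pair $h_1,h_2$ satisfies the Lipschitz similarity condition with $\delta_1,\delta_2\ge0$ if for all $x,\tilde x$: $\mathbb{E}\|\mathcal{G}(h_1,x,\tilde x)-\nabla f(x)\|^{3/2}\le\delta_1^{3/2}\|x-\tilde x\|^3$ and $\mathbb{E}\|\mathcal{H}(h_2,x,\tilde x)-\nabla^2 f(x)\|^3\le\delta_2^3\|x-\tilde x\|^3$. *)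

theory Defs
  imports "HOL-Analysis.Analysis" "HOL-Library.Function_Algebras"
begin

text \<open>Explicit-carrier model of R^d (d varies inside the statement, because the
constant C must be absolute, i.e. independent of d).  A vector of R^d is a
function nat => real whose coordinates j >= d vanish; a d x d matrix is a
function nat => nat => real of which only the entries i,j < d matter.\<close>

type_synonym vec = "nat \<Rightarrow> real"
type_synonym mat = "nat \<Rightarrow> nat \<Rightarrow> real"

definition Rd :: "nat \<Rightarrow> vec set" where
  "Rd d = {x. \<forall>j\<ge>d. x j = 0}"

definition vnorm :: "nat \<Rightarrow> vec \<Rightarrow> real" where
  "vnorm d x = sqrt (\<Sum>j<d. (x j)\<^sup>2)"

definition vinner :: "nat \<Rightarrow> vec \<Rightarrow> vec \<Rightarrow> real" where
  "vinner d x y = (\<Sum>j<d. x j * y j)"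

definition mv :: "nat \<Rightarrow> mat \<Rightarrow> vec \<Rightarrow> vec" where
  "mv d A v = (\<lambda>i. if i < d then (\<Sum>j<d. A i j * v j) else 0)"

definition specnorm :: "nat \<Rightarrow> mat \<Rightarrow> real" where
  "specnorm d A = Sup {vnorm d (mv d A v) | v. v \<in> Rd d \<and> vnorm d v \<le> 1}"

definition has_grad :: "nat \<Rightarrow> (vec \<Rightarrow> real) \<Rightarrow> vec \<Rightarrow> vec \<Rightarrow> bool" where
  "has_grad d f g x \<longleftrightarrow> (\<forall>e>0. \<exists>r>0. \<forall>h\<in>Rd d. vnorm d h < r \<longrightarrow>
      \<bar>f (x + h) - f x - vinner d g h\<bar> \<le> e * vnorm d h)"

definition has_jac :: "nat \<Rightarrow> (vec \<Rightarrow> vec) \<Rightarrow> mat \<Rightarrow> vec \<Rightarrow> bool" where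
  "has_jac d G H x \<longleftrightarrow> (\<forall>e>0. \<exists>r>0. \<forall>h\<in>Rd d. vnorm d h < r \<longrightarrow>
      vnorm d (G (x + h) - G x - mv d H h) \<le> e * vnorm d h)"

text \<open>Gradient and Hessian (unique in the coordinates < d whenever they exist).\<close>
definition grad :: "nat \<Rightarrow> (vec \<Rightarrow> real) \<Rightarrow> vec \<Rightarrow> vec" where
  "grad d f x = (\<lambda>j. if j < d then (SOME g. has_grad d f g x) j else 0)"

definition hess :: "nat \<Rightarrow> (vec \<Rightarrow> real) \<Rightarrow> vec \<Rightarrow> mat" where
  "hess d f x = (SOME H. has_jac d (grad d f) H x)"

definition twice_diff :: "nat \<Rightarrow> (vec \<Rightarrow> real) \<Rightarrow> bool" where
  "twice_diff d f \<longleftrightarrow> (\<forall>x\<in>Rd d. (\<exists>g. has_grad d f g x) \<and> (\<exists>H. has_jac d (grad d f) H x))"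

definition lipschitz_hess :: "nat \<Rightarrow> real \<Rightarrow> (vec \<Rightarrow> real) \<Rightarrow> bool" where
  "lipschitz_hess d L f \<longleftrightarrow>
     (\<forall>x\<in>Rd d. \<forall>y\<in>Rd d. specnorm d (hess d f x - hess d f y) \<le> L * vnorm d (x - y))"

definition calG :: "nat \<Rightarrow> (vec \<Rightarrow> real) \<Rightarrow> (vec \<Rightarrow> real) \<Rightarrow> vec \<Rightarrow> vec \<Rightarrow> vec" where
  "calG d f h x xt = grad d h x - grad d h xt + grad d f xt
      + mv d (hess d f xt - hess d h xt) (x - xt)"

definition calH :: "nat \<Rightarrow> (vec \<Rightarrow> real) \<Rightarrow> (vec \<Rightarrow> real) \<Rightarrow> vec \<Rightarrow> vec \<Rightarrow> mat" where
  "calH d f h x xt = hess d h x - hess d h xt + hess d f xt"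

text \<open>A batch of b i.i.d.
uniform indices from {0..<n} is a map B : {0..<b} -> {0..<n}; the expectation
over B is the uniform average over all n^b such maps.\<close>
definition favg :: "nat \<Rightarrow> (nat \<Rightarrow> vec \<Rightarrow> real) \<Rightarrow> vec \<Rightarrow> real" where
  "favg n fs = (\<lambda>x. (\<Sum>i<n. fs i x) / real n)"

definition batches :: "nat \<Rightarrow> nat \<Rightarrow> (nat \<Rightarrow> nat) set" where
  "batches n b = PiE {..<b} (\<lambda>_. {..<n})"

definition hB :: "nat \<Rightarrow> (nat \<Rightarrow> vec \<Rightarrow> real) \<Rightarrow> (nat \<Rightarrow> nat) \<Rightarrow> vec \<Rightarrow> real" where
  "hB b fs B = (\<lambda>x. (\<Sum>k<b. fs (B k) x) / real b)"

definition EB :: "nat \<Rightarrow> nat \<Rightarrow> ((nat \<Rightarrow> nat) \<Rightarrow> real) \<Rightarrow> real" where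
  "EB n b Z = (\<Sum>B\<in>batches n b. Z B) / real n ^ b"

end

theory Submission
  imports Defs
begin

text \<open>Both errors are averages of \<open>b\<close> independent centred samples.  For the gradient the
samples are the Taylor remainders \<open>\<nabla>f\<^sub>i(x) - \<nabla>f\<^sub>i(x') - \<nabla>\<^sup>2f\<^sub>i(x')(x - x')\<close>, centred at their
mean.  Each has norm at most \<open>L|x - x'|^2\<close>, so the mean square of the norm of the batch average
is at most \<open>(L|x - x'|^2)^2/b\<close>, and the \<open>3/2\<close>-moment follows by Lyapunov's inequality.

For the Hessian the samples are the centred differences \<open>\<nabla>\<^sup>2f\<^sub>i(x) - \<nabla>\<^sup>2f\<^sub>i(x')\<close>, of spectral
norm at most \<open>R = 2L|x - x'|\<close>.  For their sum \<open>S\<close> and \<open>m = 2^k\<close>, \<open>\<parallel>S\<parallel>^m\<close> is bounded by the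
trace of \<open>(S^T S)^(m/2)\<close>, a word of length \<open>m\<close> in \<open>S\<close> and \<open>S^T\<close>.  Adding one sample \<open>Y\<close> to \<open>S\<close>
and expanding the word multilinearly, every term with exactly one factor \<open>Y\<close> has mean zero;
by induction on the batch size this gives \<open>|E tr w(S)| \<le> d R^m m! exp(b t^2) / t^m\<close> for every
word \<open>w\<close> of length \<open>m\<close> and every \<open>t > 0\<close>.  Taking \<open>m \<approx> log d\<close> and \<open>t^2 = m/(2b)\<close> bounds
\<open>E\<parallel>S\<parallel>^m\<close> by \<open>(c m b R^2)^(m/2)\<close>, and the third moment follows.\<close>

section \<open>Vectors\<close>

lemma vnorm_L2: "vnorm d x = L2_set x {..<d}"
  unfolding vnorm_def L2_set_def by simp

lemma vnorm_nonneg[simp]: "0 \<le> vnorm d x"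
  unfolding vnorm_def by (simp add: sum_nonneg)

lemma vnorm_sq: "(vnorm d x)^2 = (\<Sum>j<d. (x j)^2)"
  unfolding vnorm_def by (simp add: sum_nonneg)

lemma vnorm_zero[simp]: "vnorm d (\<lambda>_. 0) = 0"
  unfolding vnorm_def by simp

lemma vnorm_cong: "(\<And>j. j < d \<Longrightarrow> x j = y j) \<Longrightarrow> vnorm d x = vnorm d y"
  unfolding vnorm_def by simp

lemma vnorm_triangle: "vnorm d (x + y) \<le> vnorm d x + vnorm d y"
  unfolding vnorm_L2 plus_fun_def by (rule L2_set_triangle_ineq)

lemma vnorm_triangle_diff: "vnorm d (x - y) \<le> vnorm d x + vnorm d y"
  using vnorm_triangle[of d x "- y"] by (simp add: vnorm_def)

lemma vnorm_scale: "vnorm d (\<lambda>j. c * x j) = \<bar>c\<bar> * vnorm d x"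
  unfolding vnorm_def by (simp add: power_mult_distrib sum_distrib_left[symmetric] real_sqrt_mult)

lemma vnorm_zero_iff: "vnorm d x = 0 \<longleftrightarrow> (\<forall>j<d. x j = 0)"
  unfolding vnorm_L2 by (auto simp: L2_set_eq_0_iff)

lemma abs_vinner_le: "\<bar>vinner d x y\<bar> \<le> vnorm d x * vnorm d y"
proof -
  have "\<bar>vinner d x y\<bar> \<le> (\<Sum>j<d. \<bar>x j\<bar> * \<bar>y j\<bar>)"
    unfolding vinner_def by (rule order_trans[OF sum_abs]) (simp add: abs_mult)
  also have "\<dots> \<le> vnorm d x * vnorm d y" unfolding vnorm_L2 by (rule L2_set_mult_ineq)
  finally show ?thesis .
qed

lemma vinner_le: "vinner d x y \<le> vnorm d x * vnorm d y"
  using abs_vinner_le by (rule abs_le_D1)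

lemma vinner_self: "vinner d x x = (vnorm d x)^2"
  unfolding vinner_def vnorm_sq by (simp add: power2_eq_square)

lemma vinner_diff: "vinner d u (a - b) = vinner d u a - vinner d u b"
  unfolding vinner_def by (simp add: sum_subtractf algebra_simps)

lemma vinner_scale: "vinner d u (\<lambda>j. s * w j) = s * vinner d u w"
  unfolding vinner_def by (simp add: sum_distrib_left ac_simps)

lemma abs_coord_le_vnorm: "j < d \<Longrightarrow> \<bar>x j\<bar> \<le> vnorm d x"
  unfolding vnorm_def by (rule real_le_rsqrt) (auto intro: member_le_sum)

lemma zero_in_Rd[simp]: "(\<lambda>_. 0) \<in> Rd d"
  unfolding Rd_def by simp

definition unit_vec :: "nat \<Rightarrow> real \<Rightarrow> vec" where
  "unit_vec j s = (\<lambda>i. if i = j then s else 0)"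

lemma unit_vec_Rd: "j < d \<Longrightarrow> unit_vec j s \<in> Rd d"
  unfolding unit_vec_def Rd_def by auto

lemma vnorm_unit_vec: "j < d \<Longrightarrow> vnorm d (unit_vec j s) = \<bar>s\<bar>"
  unfolding vnorm_def unit_vec_def
  by (subst sum.cong[OF refl, of _ _ "\<lambda>i. if i = j then s^2 else 0"]) auto

lemma vinner_unit_vec: "j < d \<Longrightarrow> vinner d g (unit_vec j s) = g j * s"
  unfolding vinner_def unit_vec_def
  by (subst sum.cong[OF refl, of _ _ "\<lambda>i. if i = j then g j * s else 0"]) auto

lemma mv_unit_vec: "i < d \<Longrightarrow> j < d \<Longrightarrow> mv d H (unit_vec j s) i = H i j * s"
  unfolding mv_def unit_vec_def
  by (subst sum.cong[OF refl, of _ _ "\<lambda>k. if k = j then H i j * s else 0"]) auto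

definition mask :: "nat \<Rightarrow> vec \<Rightarrow> vec" where
  "mask d v = (\<lambda>j. if j < d then v j else 0)"

lemma mask_Rd: "mask d v \<in> Rd d"
  unfolding mask_def Rd_def by auto

lemma mv_mask: "mv d A (mask d v) = mv d A v"
  unfolding mv_def mask_def by auto

lemma vnorm_mask: "vnorm d (mask d v) = vnorm d v"
  unfolding vnorm_def mask_def by simp

section \<open>Matrices and the spectral norm\<close>

definition mmul :: "nat \<Rightarrow> mat \<Rightarrow> mat \<Rightarrow> mat" where
  "mmul d A B = (\<lambda>i j. if i < d \<and> j < d then (\<Sum>k<d. A i k * B k j) else 0)"

definition mident :: "nat \<Rightarrow> mat" where
  "mident d = (\<lambda>i j. if i < d \<and> j < d \<and> i = j then 1 else 0)"

definition mT :: "mat \<Rightarrow> mat" where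
  "mT A = (\<lambda>i j. A j i)"

definition mtr :: "nat \<Rightarrow> mat \<Rightarrow> real" where
  "mtr d A = (\<Sum>i<d. A i i)"

definition frob_sq :: "nat \<Rightarrow> mat \<Rightarrow> real" where
  "frob_sq d A = (\<Sum>i<d. \<Sum>j<d. (A i j)^2)"

definition meq :: "nat \<Rightarrow> mat \<Rightarrow> mat \<Rightarrow> bool" where
  "meq d A B \<longleftrightarrow> (\<forall>i<d. \<forall>j<d. A i j = B i j)"

definition masked :: "nat \<Rightarrow> mat \<Rightarrow> bool" where
  "masked d A \<longleftrightarrow> (\<forall>i j. \<not> (i < d \<and> j < d) \<longrightarrow> A i j = 0)"

lemma mT_mT[simp]: "mT (mT A) = A"
  unfolding mT_def by simp

lemma meq_refl[simp]: "meq d A A"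
  unfolding meq_def by simp

lemma frob_sq_nonneg: "0 \<le> frob_sq d A"
  unfolding frob_sq_def by (simp add: sum_nonneg)

lemma mv_cong: "meq d A B \<Longrightarrow> (\<And>j. j < d \<Longrightarrow> v j = w j) \<Longrightarrow> mv d A v = mv d B w"
  unfolding mv_def meq_def by (auto intro!: sum.cong)

lemma mv_add: "mv d (A + B) v = mv d A v + mv d B v"
  unfolding mv_def by (auto simp: sum.distrib algebra_simps)

lemma mv_diff: "mv d (A - B) v = mv d A v - mv d B v"
  unfolding mv_def by (auto simp: sum_subtractf algebra_simps)

lemma mv_scale: "mv d (\<lambda>i j. c * A i j) v = (\<lambda>i. c * mv d A v i)"
  unfolding mv_def by (auto simp: sum_distrib_left ac_simps)

lemma mv_scale_vec: "mv d H (\<lambda>j. s * v j) = (\<lambda>i. s * mv d H v i)"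
  unfolding mv_def by (auto intro!: ext simp: sum_distrib_left ac_simps)

lemma mv_mmul: "mv d (mmul d A B) v = mv d A (mv d B v)"
proof -
  have "(\<Sum>k<d. (\<Sum>l<d. A i l * B l k) * v k) = (\<Sum>l<d. A i l * (\<Sum>k<d. B l k * v k))" for i
    by (simp add: sum_distrib_left sum_distrib_right mult.assoc) (rule sum.swap)
  then show ?thesis unfolding mv_def mmul_def by (auto intro!: ext sum.cong)
qed

lemma vinner_mv_mT: "vinner d u (mv d A v) = vinner d (mv d (mT A) u) v"
proof -
  have "(\<Sum>i<d. u i * (\<Sum>j<d. A i j * v j)) = (\<Sum>j<d. (\<Sum>i<d. A i j * u i) * v j)"
    by (simp add: sum_distrib_left sum_distrib_right ac_simps) (rule sum.swap)
  then show ?thesis unfolding vinner_def mv_def mT_def by simp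
qed

lemma vnorm_mv_le_frob: "vnorm d (mv d A v) \<le> sqrt (frob_sq d A) * vnorm d v"
proof -
  have "(vnorm d (mv d A v))^2 = (\<Sum>i<d. (\<Sum>j<d. A i j * v j)^2)"
    unfolding vnorm_sq mv_def by simp
  also have "\<dots> \<le> (\<Sum>i<d. (\<Sum>j<d. (A i j)^2) * (\<Sum>j<d. (v j)^2))"
    by (rule sum_mono) (rule Cauchy_Schwarz_ineq_sum)
  also have "\<dots> = (sqrt (frob_sq d A) * vnorm d v)^2"
    unfolding frob_sq_def vnorm_sq power_mult_distrib
    by (simp add: sum_distrib_right sum_nonneg)
  finally show ?thesis
    by (rule power2_le_imp_le) (simp add: frob_sq_nonneg)
qed

lemma specnorm_bdd: "bdd_above {vnorm d (mv d A v) | v. v \<in> Rd d \<and> vnorm d v \<le> 1}"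
proof (rule bdd_aboveI)
  fix y assume "y \<in> {vnorm d (mv d A v) | v. v \<in> Rd d \<and> vnorm d v \<le> 1}"
  then obtain v where "y = vnorm d (mv d A v)" "vnorm d v \<le> 1" by auto
  moreover have "sqrt (frob_sq d A) * vnorm d v \<le> sqrt (frob_sq d A)"
    using \<open>vnorm d v \<le> 1\<close> by (simp add: mult_left_le frob_sq_nonneg)
  ultimately show "y \<le> sqrt (frob_sq d A)" using vnorm_mv_le_frob[of d A v] by linarith
qed

lemma vnorm_mv_le_specnorm_unit:
  "v \<in> Rd d \<Longrightarrow> vnorm d v \<le> 1 \<Longrightarrow> vnorm d (mv d A v) \<le> specnorm d A"
  unfolding specnorm_def by (rule cSup_upper[OF _ specnorm_bdd]) blast

lemma specnorm_nonneg[simp]: "0 \<le> specnorm d A"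
  using order_trans[OF vnorm_nonneg vnorm_mv_le_specnorm_unit[OF zero_in_Rd]] by simp

lemma vnorm_mv_le: "vnorm d (mv d A v) \<le> specnorm d A * vnorm d v"
proof (cases "vnorm d v = 0")
  case True
  then have "mv d A v = (\<lambda>_. 0)" unfolding mv_def by (auto simp: vnorm_zero_iff)
  then show ?thesis by simp
next
  case False
  let ?c = "vnorm d v"
  have c: "?c > 0" using False vnorm_nonneg[of d v] by linarith
  define u where "u = (\<lambda>j. (1 / ?c) * mask d v j)"
  have "u \<in> Rd d" using mask_Rd[of d v] unfolding u_def Rd_def by auto
  moreover have "vnorm d u = 1" unfolding u_def vnorm_scale vnorm_mask using c by simp
  ultimately have "vnorm d (mv d A u) \<le> specnorm d A" by (simp add: vnorm_mv_le_specnorm_unit)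
  moreover have "mv d A u = (\<lambda>i. (1 / ?c) * mv d A v i)"
    unfolding u_def mv_scale_vec mv_mask ..
  then have "vnorm d (mv d A u) = (1 / ?c) * vnorm d (mv d A v)"
    using vnorm_scale[of d "1 / ?c" "mv d A v"] c by simp
  ultimately show ?thesis using c by (simp add: field_simps)
qed

lemma specnorm_le:
  assumes "0 \<le> c" "\<And>v. v \<in> Rd d \<Longrightarrow> vnorm d (mv d A v) \<le> c * vnorm d v"
  shows "specnorm d A \<le> c"
  unfolding specnorm_def
proof (rule cSup_least)
  have "vnorm d (mv d A (\<lambda>_. 0)) \<in> {vnorm d (mv d A v) |v. v \<in> Rd d \<and> vnorm d v \<le> 1}"
    by (intro CollectI exI[of _ "\<lambda>_. 0"]) simp
  then show "{vnorm d (mv d A v) |v. v \<in> Rd d \<and> vnorm d v \<le> 1} \<noteq> {}" by blast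
  fix y assume "y \<in> {vnorm d (mv d A v) |v. v \<in> Rd d \<and> vnorm d v \<le> 1}"
  then obtain v where v: "y = vnorm d (mv d A v)" "v \<in> Rd d" "vnorm d v \<le> 1" by auto
  have "c * vnorm d v \<le> c" using v(3) assms(1) by (simp add: mult_left_le)
  then show "y \<le> c" using assms(2)[OF v(2)] v(1) by linarith
qed

lemma specnorm_cong: "meq d A B \<Longrightarrow> specnorm d A = specnorm d B"
  unfolding specnorm_def using mv_cong[of d A B] by metis

lemma specnorm_triangle: "specnorm d (A + B) \<le> specnorm d A + specnorm d B"
  by (rule specnorm_le, simp add: add_nonneg_nonneg, unfold mv_add)
     (rule order_trans[OF vnorm_triangle], simp add: vnorm_mv_le distrib_right add_mono)

lemma specnorm_diff: "specnorm d (A - B) \<le> specnorm d A + specnorm d B"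
  by (rule specnorm_le, simp add: add_nonneg_nonneg, unfold mv_diff)
     (rule order_trans[OF vnorm_triangle_diff], simp add: vnorm_mv_le distrib_right add_mono)

lemma specnorm_scale_le: "specnorm d (\<lambda>i j. c * A i j) \<le> \<bar>c\<bar> * specnorm d A"
  by (rule specnorm_le, simp, unfold mv_scale vnorm_scale mult.assoc)
     (rule mult_left_mono[OF vnorm_mv_le], simp)

lemma specnorm_scale: "specnorm d (\<lambda>i j. c * A i j) = \<bar>c\<bar> * specnorm d A"
proof (cases "c = 0")
  case True
  then show ?thesis using specnorm_scale_le[of d 0 A] specnorm_nonneg[of d "\<lambda>i j. 0"] by simp
next
  case False
  have "specnorm d A \<le> \<bar>1/c\<bar> * specnorm d (\<lambda>i j. c * A i j)"
    using specnorm_scale_le[of d "1/c" "\<lambda>i j. c * A i j"] False by simp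
  then have "\<bar>c\<bar> * specnorm d A \<le> specnorm d (\<lambda>i j. c * A i j)"
    using False by (simp add: field_simps abs_divide)
  then show ?thesis using specnorm_scale_le[of d c A] by linarith
qed

lemma specnorm_zero: "meq d A (\<lambda>_ _. 0) \<Longrightarrow> specnorm d A = 0"
  using specnorm_cong[of d A "\<lambda>i j. 0 * A i j"] specnorm_scale[of d 0 A] by (simp add: meq_def)

lemma specnorm_sum: "specnorm d (\<Sum>c\<in>C. A c) \<le> (\<Sum>c\<in>C. specnorm d (A c))"
proof (induction C rule: infinite_finite_induct)
  case (insert c C)
  have "specnorm d (\<Sum>c\<in>insert c C. A c) = specnorm d (A c + (\<Sum>c\<in>C. A c))"
    by (simp only: sum.insert[OF insert(1,2)])
  also have "\<dots> \<le> specnorm d (A c) + (\<Sum>c\<in>C. specnorm d (A c))"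
    using specnorm_triangle[of d "A c" "\<Sum>c\<in>C. A c"] insert(3) by linarith
  also have "\<dots> = (\<Sum>c\<in>insert c C. specnorm d (A c))"
    using insert(1,2) by simp
  finally show ?case .
qed (simp_all add: specnorm_zero meq_def)

lemma specnorm_mmul: "specnorm d (mmul d A B) \<le> specnorm d A * specnorm d B"
  by (rule specnorm_le, simp, unfold mv_mmul, rule order_trans[OF vnorm_mv_le])
     (simp add: vnorm_mv_le mult.assoc mult_left_mono)

lemma specnorm_mT_le: "specnorm d (mT A) \<le> specnorm d A"
proof (rule specnorm_le, simp)
  fix u :: vec
  let ?w = "mv d (mT A) u"
  have "(vnorm d ?w)^2 = vinner d (mv d A ?w) u"
    using vinner_mv_mT[of d ?w "mT A" u] by (simp add: vinner_self)
  also have "\<dots> \<le> specnorm d A * vnorm d ?w * vnorm d u"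
    by (rule order_trans[OF vinner_le]) (simp add: vnorm_mv_le mult_right_mono)
  finally have "vnorm d ?w * vnorm d ?w \<le> (specnorm d A * vnorm d u) * vnorm d ?w"
    by (simp add: power2_eq_square ac_simps)
  then show "vnorm d ?w \<le> specnorm d A * vnorm d u"
    by (cases "vnorm d ?w = 0") (simp_all add: less_le)
qed

lemma specnorm_mT: "specnorm d (mT A) = specnorm d A"
  using specnorm_mT_le[of d A] specnorm_mT_le[of d "mT A"] by simp

lemma specnorm_mT_mmul_self: "specnorm d (mmul d (mT A) A) = (specnorm d A)^2"
proof (rule antisym)
  show "specnorm d (mmul d (mT A) A) \<le> (specnorm d A)^2"
    using specnorm_mmul[of d "mT A" A] by (simp add: specnorm_mT power2_eq_square)
  let ?G = "mmul d (mT A) A"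
  have "specnorm d A \<le> sqrt (specnorm d ?G)"
  proof (rule specnorm_le, simp)
    fix v :: vec
    have "(vnorm d (mv d A v))^2 = vinner d (mv d ?G v) v"
      by (simp add: vinner_self[symmetric] vinner_mv_mT mv_mmul)
    also have "\<dots> \<le> specnorm d ?G * vnorm d v * vnorm d v"
      by (rule order_trans[OF vinner_le]) (simp add: vnorm_mv_le mult_right_mono)
    also have "\<dots> = (sqrt (specnorm d ?G) * vnorm d v)^2"
      by (simp add: power_mult_distrib power2_eq_square)
    finally show "vnorm d (mv d A v) \<le> sqrt (specnorm d ?G) * vnorm d v"
      by (rule power2_le_imp_le) simp
  qed
  then show "(specnorm d A)^2 \<le> specnorm d ?G"
    using power_mono[of "specnorm d A" "sqrt (specnorm d ?G)" 2] by simp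
qed

lemma specnorm_sq_le_frob_sq: "(specnorm d A)^2 \<le> frob_sq d A"
proof -
  have "specnorm d A \<le> sqrt (frob_sq d A)"
    by (rule specnorm_le) (simp_all add: frob_sq_nonneg vnorm_mv_le_frob)
  then show ?thesis
    using power_mono[of "specnorm d A" "sqrt (frob_sq d A)" 2] by (simp add: frob_sq_nonneg)
qed

lemma abs_mtr_le: "\<bar>mtr d A\<bar> \<le> real d * specnorm d A"
proof -
  have "\<bar>A i i\<bar> \<le> specnorm d A" if i: "i < d" for i
  proof -
    have "\<bar>A i i\<bar> = \<bar>mv d A (unit_vec i 1) i\<bar>" using mv_unit_vec[OF i i] by simp
    also have "\<dots> \<le> vnorm d (mv d A (unit_vec i 1))" by (rule abs_coord_le_vnorm[OF i])
    also have "\<dots> \<le> specnorm d A"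
      using vnorm_mv_le[of d A "unit_vec i 1"] vnorm_unit_vec[OF i, of 1] by simp
    finally show ?thesis .
  qed
  then have "\<bar>mtr d A\<bar> \<le> (\<Sum>i<d. specnorm d A)"
    unfolding mtr_def by (intro order_trans[OF sum_abs] sum_mono) auto
  then show ?thesis by simp
qed

section \<open>Products of words of matrices\<close>

lemma sum_fun_apply: "(sum G C) x = (\<Sum>c\<in>C. G c x)"
  by (induction C rule: infinite_finite_induct) auto

lemma msum_apply: "(sum G C :: mat) i j = (\<Sum>c\<in>C. G c i j)"
  by (simp add: sum_fun_apply)

lemma mmul_sum_left: "mmul d (\<Sum>c\<in>C. G c) B = (\<Sum>c\<in>C. mmul d (G c) B)"
  unfolding mmul_def
  by (rule ext, rule ext) (auto simp: msum_apply sum_distrib_right intro: sum.swap)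

lemma mmul_sum_right: "mmul d A (\<Sum>c\<in>C. G c) = (\<Sum>c\<in>C. mmul d A (G c))"
  unfolding mmul_def
  by (rule ext, rule ext) (auto simp: msum_apply sum_distrib_left intro: sum.swap)

lemma mmul_cong: "meq d A A' \<Longrightarrow> meq d B B' \<Longrightarrow> mmul d A B = mmul d A' B'"
  unfolding mmul_def meq_def by (auto intro!: ext sum.cong)

lemma mmul_assoc: "mmul d (mmul d A B) C = mmul d A (mmul d B C)"
proof (rule ext, rule ext)
  fix i j
  have *: "(\<Sum>k<d. (\<Sum>l<d. A i l * B l k) * C k j) = (\<Sum>l<d. A i l * (\<Sum>k<d. B l k * C k j))"
    by (simp add: sum_distrib_left sum_distrib_right mult.assoc) (rule sum.swap)
  show "mmul d (mmul d A B) C i j = mmul d A (mmul d B C) i j"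
    unfolding mmul_def using * by (auto intro!: sum.cong)
qed

lemma mT_mmul: "mT (mmul d A B) = mmul d (mT B) (mT A)"
  unfolding mT_def mmul_def by (auto intro!: ext sum.cong simp: mult.commute)

lemma mT_add: "mT (A + B) = mT A + mT B"
  unfolding mT_def by (simp add: fun_eq_iff)

lemma mmul_add_right: "mmul d A (B + B') = mmul d A B + mmul d A B'"
  unfolding mmul_def by (auto intro!: ext simp: sum.distrib algebra_simps)

lemma meq_sym: "meq d A B \<Longrightarrow> meq d B A"
  unfolding meq_def by auto

lemma meq_mmul_mident_left: "meq d (mmul d (mident d) A) A"
proof -
  have "(\<Sum>k<d. mident d i k * A k j) = A i j" if "i < d" for i j
  proof -
    have "(\<Sum>k<d. mident d i k * A k j) = (\<Sum>k<d. if i = k then A k j else 0)"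
      unfolding mident_def using that by (intro sum.cong) auto
    then show ?thesis using that by (simp add: sum.delta)
  qed
  then show ?thesis unfolding meq_def mmul_def by auto
qed

lemma mT_sum: "mT (\<Sum>c\<in>C. G c) = (\<Sum>c\<in>C. mT (G c))"
  unfolding mT_def by (auto intro!: ext simp: msum_apply)

lemma mtr_sum: "mtr d (\<Sum>c\<in>C. G c) = (\<Sum>c\<in>C. mtr d (G c))"
  unfolding mtr_def by (simp add: msum_apply) (rule sum.swap)

lemma mtr_mT_mmul_self: "mtr d (mmul d (mT A) A) = frob_sq d A"
  unfolding mtr_def mmul_def mT_def frob_sq_def by (simp add: power2_eq_square) (rule sum.swap)

lemma masked_mmul: "masked d (mmul d A B)"
  unfolding masked_def mmul_def by auto

lemma masked_mident: "masked d (mident d)"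
  unfolding masked_def mident_def by auto

lemma mmul_mident_right: "masked d A \<Longrightarrow> mmul d A (mident d) = A"
proof (rule ext, rule ext)
  fix i j assume m: "masked d A"
  show "mmul d A (mident d) i j = A i j"
  proof (cases "i < d \<and> j < d")
    case True
    then have "(\<Sum>k<d. A i k * mident d k j) = (\<Sum>k<d. if k = j then A i j else 0)"
      unfolding mident_def by (intro sum.cong) auto
    then show ?thesis using True unfolding mmul_def by simp
  next
    case False then show ?thesis using m unfolding mmul_def masked_def by auto
  qed
qed

fun mprod :: "nat \<Rightarrow> nat \<Rightarrow> (nat \<Rightarrow> mat) \<Rightarrow> mat" where
  "mprod d 0 F = mident d"
| "mprod d (Suc L) F = mmul d (mprod d L F) (F L)"

lemma masked_mprod: "masked d (mprod d L F)"
  by (cases L) (simp_all add: masked_mident masked_mmul)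

lemma mprod_cong: "(\<And>i. i < L \<Longrightarrow> meq d (F i) (G i)) \<Longrightarrow> mprod d L F = mprod d L G"
  by (induction L) (auto intro!: mmul_cong)

lemma specnorm_mident: "specnorm d (mident d) \<le> 1"
proof (rule specnorm_le, simp)
  fix v :: vec
  have "mv d (mident d) v j = mask d v j" for j
  proof (cases "j < d")
    case True
    have "(\<Sum>k<d. mident d j k * v k) = (\<Sum>k<d. if j = k then v k else 0)"
      unfolding mident_def using True by (intro sum.cong) auto
    then show ?thesis using True unfolding mv_def mask_def by (simp add: sum.delta)
  next
    case False then show ?thesis unfolding mv_def mask_def by simp
  qed
  then have "mv d (mident d) v = mask d v" by (rule ext)
  then show "vnorm d (mv d (mident d) v) \<le> 1 * vnorm d v" by (simp add: vnorm_mask)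
qed

lemma specnorm_mprod: "specnorm d (mprod d L F) \<le> (\<Prod>i<L. specnorm d (F i))"
proof (induction L)
  case 0 then show ?case by (simp add: specnorm_mident)
next
  case (Suc L)
  have "specnorm d (mprod d (Suc L) F) \<le> specnorm d (mprod d L F) * specnorm d (F L)"
    by (simp add: specnorm_mmul)
  also have "\<dots> \<le> (\<Prod>i<L. specnorm d (F i)) * specnorm d (F L)"
    by (rule mult_right_mono[OF Suc]) simp
  finally show ?case by simp
qed

lemma mprod_expand:
  "mprod d L (\<lambda>i. if i \<in> A then F i + G i else F i)
   = (\<Sum>Q\<in>Pow (A \<inter> {..<L}). mprod d L (\<lambda>i. if i \<in> Q then G i else F i))"
proof (induction L)
  case 0 then show ?case by simp
next
  case (Suc L)
  let ?H = "\<lambda>Q i. if i \<in> Q then G i else F i"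
  have cong: "mprod d L (\<lambda>i. if i = L \<or> i \<in> Q then G i else F i) = mprod d L (?H Q)" for Q
    by (rule mprod_cong) auto
  show ?case
  proof (cases "L \<in> A")
    case True
    have P: "Pow (A \<inter> {..<Suc L}) = Pow (A \<inter> {..<L}) \<union> insert L ` Pow (A \<inter> {..<L})"
      using True by (auto simp: lessThan_Suc Pow_insert)
    have disj: "Pow (A \<inter> {..<L}) \<inter> insert L ` Pow (A \<inter> {..<L}) = {}" by auto
    have inj: "inj_on (insert L) (Pow (A \<inter> {..<L}))"
      by (rule inj_onI) (metis Int_iff Pow_iff insert_absorb insert_ident lessThan_iff less_irrefl subset_iff)
    have "mprod d (Suc L) (\<lambda>i. if i \<in> A then F i + G i else F i)
       = mmul d (\<Sum>Q\<in>Pow (A \<inter> {..<L}). mprod d L (?H Q)) (F L + G L)"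
      using Suc True by simp
    also have "\<dots> = (\<Sum>Q\<in>Pow (A \<inter> {..<L}). mmul d (mprod d L (?H Q)) (F L))
                 + (\<Sum>Q\<in>Pow (A \<inter> {..<L}). mmul d (mprod d L (?H Q)) (G L))"
      by (simp add: mmul_add_right mmul_sum_left)
    also have "(\<Sum>Q\<in>Pow (A \<inter> {..<L}). mmul d (mprod d L (?H Q)) (F L))
             = (\<Sum>Q\<in>Pow (A \<inter> {..<L}). mprod d (Suc L) (?H Q))"
      by (intro sum.cong) auto
    also have "(\<Sum>Q\<in>Pow (A \<inter> {..<L}). mmul d (mprod d L (?H Q)) (G L))
             = (\<Sum>Q\<in>insert L ` Pow (A \<inter> {..<L}). mprod d (Suc L) (?H Q))"
      by (subst sum.reindex[OF inj]) (auto intro!: sum.cong simp: cong)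
    also have "(\<Sum>Q\<in>Pow (A \<inter> {..<L}). mprod d (Suc L) (?H Q)) + \<dots>
       = (\<Sum>Q\<in>Pow (A \<inter> {..<Suc L}). mprod d (Suc L) (?H Q))"
      unfolding P by (rule sum.union_disjoint[symmetric]) (auto simp: disj)
    finally show ?thesis .
  next
    case False
    have P: "A \<inter> {..<Suc L} = A \<inter> {..<L}" using False by (auto simp: lessThan_Suc)
    have "mprod d (Suc L) (\<lambda>i. if i \<in> A then F i + G i else F i)
       = mmul d (\<Sum>Q\<in>Pow (A \<inter> {..<L}). mprod d L (?H Q)) (F L)"
      using Suc False by simp
    also have "\<dots> = (\<Sum>Q\<in>Pow (A \<inter> {..<L}). mprod d (Suc L) (?H Q))"
      by (simp add: mmul_sum_left) (intro sum.cong, auto)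
    finally show ?thesis unfolding P .
  qed
qed

lemma mprod_lin:
  assumes "i < L"
  shows "(\<Sum>c\<in>C. mprod d L (F(i := G c))) = mprod d L (F(i := \<Sum>c\<in>C. G c))"
  using assms
proof (induction L)
  case 0 then show ?case by simp
next
  case (Suc L)
  show ?case
  proof (cases "i = L")
    case True
    have eqs: "\<And>c. mprod d L (F(L := G c)) = mprod d L F" "mprod d L (F(L := \<Sum>c\<in>C. G c)) = mprod d L F"
      by (auto intro!: mprod_cong)
    show ?thesis unfolding True by (simp only: mprod.simps eqs fun_upd_same mmul_sum_right)
  next
    case False
    then have "i < L" using Suc by simp
    then show ?thesis using Suc False by (simp add: mmul_sum_left[symmetric])
  qed
qed

lemma mprod_zero_slot:
  assumes "i < L" "meq d (F i) (\<lambda>_ _. 0)"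
  shows "mprod d L F = (\<lambda>_ _. 0)"
  using assms
proof (induction L)
  case 0 then show ?case by simp
next
  case (Suc L)
  show ?case
  proof (cases "i = L")
    case True
    then show ?thesis using Suc.prems unfolding meq_def by (auto intro!: ext simp: mmul_def)
  next
    case False
    then show ?thesis using Suc by (auto intro!: ext simp: mmul_def)
  qed
qed

lemma mprod_append: "mprod d (a + b) F = mmul d (mprod d a F) (mprod d b (\<lambda>i. F (a + i)))"
proof (induction b)
  case 0 then show ?case by (simp add: mmul_mident_right masked_mprod)
next
  case (Suc b)
  then show ?case by (simp add: mmul_assoc)
qed

lemma mT_mprod: "mT (mprod d L F) = mprod d L (\<lambda>i. mT (F (L - 1 - i)))"
proof (induction L arbitrary: F)
  case 0 then show ?case by (simp add: mident_def mT_def ext)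
next
  case (Suc L)
  have "mT (mprod d (Suc L) F) = mmul d (mT (F L)) (mprod d L (\<lambda>i. mT (F (L - 1 - i))))"
    by (simp add: mT_mmul Suc)
  also have "\<dots> = mmul d (mprod d 1 (\<lambda>i. mT (F (Suc L - 1 - i)))) (mprod d L (\<lambda>i. mT (F (Suc L - 1 - (1 + i)))))"
    by (rule mmul_cong) (auto simp: meq_sym[OF meq_mmul_mident_left])
  also have "\<dots> = mprod d (1 + L) (\<lambda>i. mT (F (Suc L - 1 - i)))"
    by (rule mprod_append[symmetric])
  finally show ?case by simp
qed
section \<open>Expectation over a uniform batch\<close>

lemma batches_Suc_sum:
  "(\<Sum>B\<in>batches n (Suc b). F B) = (\<Sum>c<n. \<Sum>B\<in>batches n b. F (B(b := c)))"
proof -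
  have eq: "batches n (Suc b) = (\<lambda>(y, g). g(b := y)) ` ({..<n} \<times> batches n b)"
    unfolding batches_def lessThan_Suc by (rule PiE_insert_eq)
  have inj: "inj_on (\<lambda>(y, g). g(b := y)) ({..<n} \<times> batches n b)"
  proof (rule inj_onI)
    fix p p' assume p: "p \<in> {..<n} \<times> batches n b" and p': "p' \<in> {..<n} \<times> batches n b"
      and e0: "(\<lambda>(y, g). g(b := y)) p = (\<lambda>(y, g). g(b := y)) p'"
    obtain y g where pe: "p = (y, g)" by (cases p)
    obtain y' g' where pe': "p' = (y', g')" by (cases p')
    have g: "g \<in> PiE {..<b} (\<lambda>_. {..<n})" using p pe unfolding batches_def by simp
    have g': "g' \<in> PiE {..<b} (\<lambda>_. {..<n})" using p' pe' unfolding batches_def by simp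
    have e: "g(b := y) = g'(b := y')" using e0 pe pe' by simp
    have "y = y'" using fun_cong[OF e, of b] by simp
    moreover have "g x = g' x" for x
    proof (cases "x = b")
      case True
      have "g x = undefined" using PiE_arb[OF g, of x] True by simp
      moreover have "g' x = undefined" using PiE_arb[OF g', of x] True by simp
      ultimately show ?thesis by simp
    next
      case False then show ?thesis using fun_cong[OF e, of x] by simp
    qed
    ultimately show "p = p'" using pe pe' by auto
  qed
  have "(\<Sum>B\<in>batches n (Suc b). F B) = (\<Sum>x\<in>{..<n} \<times> batches n b. F ((\<lambda>(y, g). g(b := y)) x))"
    unfolding eq by (subst sum.reindex[OF inj]) (simp add: comp_def)
  also have "\<dots> = (\<Sum>(y, g)\<in>{..<n} \<times> batches n b. F (g(b := y)))"
    by (simp add: case_prod_beta)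
  also have "\<dots> = (\<Sum>c<n. \<Sum>B\<in>batches n b. F (B(b := c)))"
    by (rule sum.cartesian_product[symmetric])
  finally show ?thesis .
qed

lemma EB_Suc: "n > 0 \<Longrightarrow> EB n (Suc b) F = (\<Sum>c<n. EB n b (\<lambda>B. F (B(b := c)))) / real n"
  unfolding EB_def batches_Suc_sum by (simp add: sum_divide_distrib[symmetric] divide_divide_eq_left mult.commute)

lemma EB_0: "EB n 0 F = F (\<lambda>_. undefined)"
  unfolding EB_def batches_def by simp

lemma EB_sum: "EB n b (\<lambda>B. \<Sum>x\<in>X. f x B) = (\<Sum>x\<in>X. EB n b (f x))"
  unfolding EB_def by (metis (no_types) sum.swap sum_divide_distrib)

lemma card_batches: "card (batches n b) = n ^ b"
  unfolding batches_def by (simp add: card_PiE)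

lemma finite_batches[simp]: "finite (batches n b)"
  unfolding batches_def by (simp add: finite_PiE)

lemma EB_const: "n > 0 \<Longrightarrow> EB n b (\<lambda>_. c) = c"
  unfolding EB_def by (simp add: card_batches)

lemma EB_mono: "(\<And>B. B \<in> batches n b \<Longrightarrow> f B \<le> g B) \<Longrightarrow> EB n b f \<le> EB n b g"
  unfolding EB_def by (intro divide_right_mono sum_mono) auto

lemma EB_cong: "(\<And>B. B \<in> batches n b \<Longrightarrow> f B = g B) \<Longrightarrow> EB n b f = EB n b g"
  unfolding EB_def by (simp cong: sum.cong)

lemma EB_cmult: "EB n b (\<lambda>B. c * f B) = c * EB n b f"
  unfolding EB_def by (simp add: sum_distrib_left)

lemma EB_add: "EB n b (\<lambda>B. f B + g B) = EB n b f + EB n b g"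
  unfolding EB_def by (simp add: sum.distrib add_divide_distrib)

lemma EB_nonneg_zero:
  assumes n: "0 < n" and nn: "\<And>B. B \<in> batches n b \<Longrightarrow> 0 \<le> f B" and le: "EB n b f \<le> 0"
    and B: "B \<in> batches n b"
  shows "f B = 0"
proof -
  have np: "real n ^ b > 0" using n by simp
  have "sum f (batches n b) \<le> 0" using le np unfolding EB_def by (auto simp: divide_le_0_iff)
  moreover have "0 \<le> sum f (batches n b)" using nn by (simp add: sum_nonneg)
  ultimately have "sum f (batches n b) = 0" by simp
  then show ?thesis using sum_nonneg_eq_0_iff[of "batches n b" f] nn B by simp
qed

lemma EB_nonneg_eq_zero:
  assumes n: "0 < n" and nn: "\<And>B. 0 \<le> X B" and le: "EB n b X \<le> 0"
  shows "EB n b (\<lambda>B. g (X B)) = g 0"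
proof -
  have "EB n b (\<lambda>B. g (X B)) = EB n b (\<lambda>_. g 0)"
    using EB_nonneg_zero[OF n _ le] nn by (intro EB_cong) simp
  then show ?thesis using EB_const[OF n] by simp
qed

text \<open>A crude Lyapunov inequality, from \<open>X^3 \<le> a^3 + X^m / a^(m-3)\<close> pointwise.\<close>

lemma EB_cube_le_of_moment:
  assumes n: "0 < n" and m: "3 \<le> m" and a: "0 \<le> a"
    and nn: "\<And>B. 0 \<le> X B" and mom: "EB n b (\<lambda>B. X B ^ m) \<le> a ^ m"
  shows "EB n b (\<lambda>B. X B ^ 3) \<le> 2 * a ^ 3"
proof (cases "a = 0")
  case True
  then have "EB n b (\<lambda>B. X B ^ m) \<le> 0" using mom m by (simp add: power_0_left)
  then show ?thesis using EB_nonneg_eq_zero[OF n, of "\<lambda>B. X B ^ m" b "\<lambda>y. root m y ^ 3"] nn m True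
    by (simp add: real_root_power_cancel)
next
  case False
  then have ap: "a > 0" using a by simp
  have pt: "X B ^ 3 \<le> a ^ 3 + X B ^ m / a ^ (m - 3)" for B
  proof (cases "X B \<le> a")
    case True
    then show ?thesis using nn[of B] ap by (simp add: power_mono add_increasing2)
  next
    case False
    have "X B ^ 3 * a ^ (m - 3) \<le> X B ^ 3 * X B ^ (m - 3)"
      using False ap nn by (intro mult_left_mono power_mono) auto
    also have "\<dots> = X B ^ m" using m by (simp add: power_add[symmetric])
    finally have "X B ^ 3 \<le> X B ^ m / a ^ (m - 3)" using ap by (simp add: field_simps)
    then show ?thesis using ap by (smt (verit) zero_le_power)
  qed
  have "EB n b (\<lambda>B. X B ^ 3) \<le> EB n b (\<lambda>B. a ^ 3 + X B ^ m / a ^ (m - 3))"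
    by (rule EB_mono) (rule pt)
  also have "\<dots> = a ^ 3 + EB n b (\<lambda>B. X B ^ m) / a ^ (m - 3)"
    using EB_add[of n b "\<lambda>_. a^3" "\<lambda>B. X B ^ m / a ^ (m - 3)"] EB_const[OF n]
      EB_cmult[of n b "1 / a ^ (m - 3)" "\<lambda>B. X B ^ m"] by simp
  also have "\<dots> \<le> a ^ 3 + a ^ m / a ^ (m - 3)"
    using mom ap by (simp add: divide_right_mono)
  also have "a ^ m / a ^ (m - 3) = a ^ 3" using ap m by (simp add: power_diff)
  finally show ?thesis by simp
qed

lemma young_three_four:
  fixes s \<alpha> :: real
  assumes "0 \<le> s" "0 < \<alpha>"
  shows "s^3 \<le> (3/4) * s^4 / \<alpha> + (1/4) * \<alpha>^3"
proof -
  have "0 \<le> (s - \<alpha>)^2 * (3 * s^2 + 2 * s * \<alpha> + \<alpha>^2)"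
    using assms by (intro mult_nonneg_nonneg) auto
  also have "\<dots> = 3 * s^4 - 4 * s^3 * \<alpha> + \<alpha>^4"
    by (simp add: power2_eq_square power3_eq_cube power4_eq_xxxx algebra_simps)
  finally have "4 * s^3 * \<alpha> \<le> 3 * s^4 + \<alpha>^4" by simp
  then show ?thesis using assms by (simp add: field_simps power3_eq_cube power4_eq_xxxx)
qed

lemma powr_three_halves: "(x::real) \<ge> 0 \<Longrightarrow> x powr (3/2) = sqrt x ^ 3"
  by (cases "x = 0") (simp_all add: powr_half_sqrt[symmetric] powr_realpow[symmetric] powr_powr)

lemma EB_powr_three_halves_le:
  assumes n: "0 < n" and a: "0 \<le> a" and nn: "\<And>B. 0 \<le> X B"
    and mom: "EB n b (\<lambda>B. X B ^ 2) \<le> a ^ 2"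
  shows "EB n b (\<lambda>B. X B powr (3/2)) \<le> a powr (3/2)"
proof (cases "a = 0")
  case True
  then show ?thesis
    using EB_nonneg_eq_zero[OF n, of "\<lambda>B. X B ^ 2" b "\<lambda>y. sqrt y powr (3/2)"] nn mom by simp
next
  case False
  let ?\<alpha> = "sqrt a"
  have \<alpha>: "?\<alpha> > 0" using False a by simp
  have sqrt4: "sqrt y ^ 4 = y ^ 2" if "0 \<le> y" for y :: real
  proof -
    have "sqrt y ^ 4 = (sqrt y ^ 2) ^ 2" by (simp add: power_mult[symmetric])
    then show ?thesis using that by simp
  qed
  have pt: "X B powr (3/2) \<le> (3/4) / ?\<alpha> * X B ^ 2 + (1/4) * ?\<alpha>^3" for B
    using young_three_four[of "sqrt (X B)" ?\<alpha>] \<alpha> nn[of B]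
    by (simp add: powr_three_halves sqrt4)
  have "EB n b (\<lambda>B. X B powr (3/2)) \<le> EB n b (\<lambda>B. (3/4) / ?\<alpha> * X B ^ 2 + (1/4) * ?\<alpha>^3)"
    by (rule EB_mono) (rule pt)
  also have "\<dots> = (3/4) / ?\<alpha> * EB n b (\<lambda>B. X B ^ 2) + (1/4) * ?\<alpha>^3"
    using EB_add[of n b "\<lambda>B. (3/4) / ?\<alpha> * X B ^ 2" "\<lambda>_. (1/4) * ?\<alpha>^3"]
      EB_cmult[of n b "(3/4) / ?\<alpha>" "\<lambda>B. X B ^ 2"] EB_const[OF n] by simp
  also have "\<dots> \<le> (3/4) / ?\<alpha> * ?\<alpha>^4 + (1/4) * ?\<alpha>^3"
    using mom \<alpha> a by (simp add: sqrt4 divide_right_mono)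
  also have "\<dots> = a powr (3/2)"
    using \<alpha> a by (simp add: powr_three_halves field_simps power3_eq_cube power4_eq_xxxx)
  finally show ?thesis .
qed

section \<open>Second moment of a batch of centred vectors\<close>

lemma EB_vnorm_sq_batch_sum:
  fixes z :: "nat \<Rightarrow> vec"
  assumes n: "0 < n" and centred: "\<And>j. j < d \<Longrightarrow> (\<Sum>c<n. z c j) = 0"
  shows "EB n b (\<lambda>B. (vnorm d (\<lambda>j. \<Sum>k<b. z (B k) j))^2) = real b * (\<Sum>c<n. (vnorm d (z c))^2) / real n"
proof (induction b)
  case 0 then show ?case by (simp add: EB_0)
next
  case (Suc b)
  let ?W = "\<lambda>B j. \<Sum>k<b. z (B k) j"
  let ?V = "\<Sum>c<n. (vnorm d (z c))^2"
  have upd: "(\<Sum>k<Suc b. z ((B(b := c)) k) j) = ?W B j + z c j" for B c j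
    by (simp add: lessThan_Suc add.commute)
  have new_sample: "(\<Sum>c<n. \<Sum>j<d. (?W B j + z c j)^2) = real n * (\<Sum>j<d. (?W B j)^2) + ?V" for B
  proof -
    have "(\<Sum>c<n. \<Sum>j<d. (?W B j + z c j)^2)
        = (\<Sum>c<n. \<Sum>j<d. (?W B j)^2 + 2 * (?W B j * z c j) + (z c j)^2)"
      by (intro sum.cong refl) (simp add: power2_sum algebra_simps)
    also have "\<dots> = (\<Sum>c<n. \<Sum>j<d. (?W B j)^2) + 2 * (\<Sum>j<d. ?W B j * (\<Sum>c<n. z c j)) + ?V"
      by (simp add: sum.distrib sum_distrib_left sum.swap[of _ "{..<n}" "{..<d}"] vnorm_sq)
    also have "(\<Sum>j<d. ?W B j * (\<Sum>c<n. z c j)) = 0" by (simp add: centred)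
    finally show ?thesis by simp
  qed
  have "EB n (Suc b) (\<lambda>B. (vnorm d (\<lambda>j. \<Sum>k<Suc b. z (B k) j))^2)
      = EB n b (\<lambda>B. \<Sum>c<n. \<Sum>j<d. (?W B j + z c j)^2) / real n"
    unfolding EB_Suc[OF n] vnorm_sq upd by (simp add: EB_sum)
  also have "\<dots> = (real n * EB n b (\<lambda>B. (vnorm d (?W B))^2) + ?V) / real n"
    unfolding new_sample by (simp add: EB_add EB_cmult EB_const[OF n] vnorm_sq)
  also have "\<dots> = real (Suc b) * ?V / real n"
    unfolding Suc using n by (simp add: field_simps)
  finally show ?case .
qed

lemma sum_sq_centred_le:
  fixes x :: "nat \<Rightarrow> real"
  assumes n: "0 < n"
  shows "(\<Sum>c<n. (x c - (\<Sum>c<n. x c) / real n)^2) \<le> (\<Sum>c<n. (x c)^2)"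
proof -
  define m where "m = (\<Sum>c<n. x c) / real n"
  have s: "(\<Sum>c<n. x c) = real n * m" using n unfolding m_def by simp
  have "(\<Sum>c<n. (x c - m)^2) = (\<Sum>c<n. (x c)^2) + (\<Sum>c<n. m^2 - 2 * m * x c)"
    by (simp add: sum.distrib[symmetric] power2_eq_square algebra_simps)
  also have "(\<Sum>c<n. m^2 - 2 * m * x c) = - (real n * m^2)"
    by (simp add: sum_subtractf sum_distrib_left[symmetric] s power2_eq_square)
  finally show ?thesis unfolding m_def[symmetric] by simp
qed

lemma sum_vnorm_sq_centred_le:
  fixes a :: "nat \<Rightarrow> vec"
  assumes n: "0 < n"
  shows "(\<Sum>c<n. (vnorm d (\<lambda>j. a c j - (\<Sum>i<n. a i j) / real n))^2) \<le> (\<Sum>c<n. (vnorm d (a c))^2)"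
proof -
  have "(\<Sum>c<n. (vnorm d (\<lambda>j. a c j - (\<Sum>i<n. a i j) / real n))^2)
      = (\<Sum>j<d. \<Sum>c<n. (a c j - (\<Sum>i<n. a i j) / real n)^2)"
    unfolding vnorm_sq by (rule sum.swap)
  also have "\<dots> \<le> (\<Sum>j<d. \<Sum>c<n. (a c j)^2)"
    by (intro sum_mono sum_sq_centred_le[OF n])
  also have "\<dots> = (\<Sum>c<n. (vnorm d (a c))^2)"
    unfolding vnorm_sq by (rule sum.swap)
  finally show ?thesis .
qed

lemma EB_vnorm_batch_mean_powr_three_halves:
  fixes z :: "nat \<Rightarrow> vec"
  assumes n: "0 < n" and b: "1 \<le> b" and centred: "\<And>j. j < d \<Longrightarrow> (\<Sum>c<n. z c j) = 0"
    and var: "(\<Sum>c<n. (vnorm d (z c))^2) \<le> real n * K^2" and K: "0 \<le> K"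
  shows "EB n b (\<lambda>B. vnorm d (\<lambda>j. (\<Sum>k<b. z (B k) j) / real b) powr (3/2))
           \<le> (K / sqrt (real b)) powr (3/2)"
proof (rule EB_powr_three_halves_le[OF n])
  have bp: "real b > 0" using b by simp
  have mean: "vnorm d (\<lambda>j. (\<Sum>k<b. z (B k) j) / real b) = (1 / real b) * vnorm d (\<lambda>j. \<Sum>k<b. z (B k) j)" for B
    using vnorm_scale[of d "1 / real b"] by simp
  have "EB n b (\<lambda>B. (vnorm d (\<lambda>j. (\<Sum>k<b. z (B k) j) / real b))^2)
      = (1 / real b)^2 * (real b * (\<Sum>c<n. (vnorm d (z c))^2) / real n)"
    unfolding mean power_mult_distrib EB_cmult by (simp only: EB_vnorm_sq_batch_sum[OF n centred])
  also have "\<dots> \<le> (1 / real b)^2 * (real b * (real n * K^2) / real n)"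
    using var bp n by (intro mult_left_mono divide_right_mono) auto
  also have "\<dots> = (K / sqrt (real b))^2"
    using bp n by (simp add: field_simps power2_eq_square)
  finally show "EB n b (\<lambda>B. (vnorm d (\<lambda>j. (\<Sum>k<b. z (B k) j) / real b))^2) \<le> (K / sqrt (real b))^2" .
qed (simp_all add: K)

section \<open>Moments of a batch of centred matrices\<close>

lemma exp_minus_self_le_exp_sq: "(t::real) \<ge> 0 \<Longrightarrow> exp t - t \<le> exp (t^2)"
proof (cases "t \<le> 1")
  case True
  assume t: "t \<ge> 0"
  have "exp t \<le> 1 + t + t^2" using exp_bound[OF t True] .
  moreover have "1 + t^2 \<le> exp (t^2)" by (rule exp_ge_add_one_self)
  ultimately show ?thesis by linarith
next
  case False
  assume t: "t \<ge> 0"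
  then have "t \<le> t^2" using False by (simp add: power2_eq_square)
  then have "exp t \<le> exp (t^2)" by simp
  then show ?thesis using t by linarith
qed

lemma sum_exp_series_le: "(t::real) \<ge> 0 \<Longrightarrow> (\<Sum>p\<le>m. t^p / fact p) \<le> exp t"
proof -
  assume t: "t \<ge> 0"
  have s: "(\<lambda>p. t^p / fact p) sums exp t" using exp_converges[of t] by (simp add: divide_inverse_commute scaleR_conv_of_real)
  show ?thesis
    by (rule sum_le_suminf[OF sums_summable[OF s], unfolded sums_unique[OF s, symmetric]]) (auto simp: t)
qed

lemma sum_exp_series_no_linear_le: "(t::real) \<ge> 0 \<Longrightarrow> (\<Sum>p\<le>m. if p = 1 then 0 else t^p / fact p) \<le> exp (t^2)"
proof -
  assume t: "t \<ge> 0"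
  have "(\<Sum>p\<le>m. if p = 1 then 0 else t^p / fact p) \<le> exp t - t"
  proof (cases "m = 0")
    case True
    have "1 + t \<le> exp t" by (rule exp_ge_add_one_self)
    then show ?thesis using True by (simp add: algebra_simps)
  next
    case False
    have "(\<Sum>p\<le>m. t^p / fact p) = (\<Sum>p\<le>m. (if p = 1 then 0 else t^p / fact p) + (if p = 1 then t else 0))"
      by (intro sum.cong) auto
    also have "\<dots> = (\<Sum>p\<le>m. if p = 1 then 0 else t^p / fact p) + (\<Sum>p\<le>m. if p = 1 then t else 0)"
      by (rule sum.distrib)
    also have "(\<Sum>p\<le>m. if p = 1 then t else (0::real)) = t"
      using False by (simp add: sum.delta)
    finally show ?thesis using sum_exp_series_le[OF t, of m] by linarith
  qed
  then show ?thesis using exp_minus_self_le_exp_sq[OF t] by linarith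
qed

lemma sum_Pow_card:
  assumes "finite A"
  shows "(\<Sum>Q\<in>Pow A. g (card Q)) = (\<Sum>p\<le>card A. of_nat (card A choose p) * g p)"
proof -
  have "(\<Sum>Q\<in>Pow A. g (card Q)) = (\<Sum>p\<le>card A. \<Sum>Q\<in>{Q \<in> Pow A. card Q = p}. g (card Q))"
    by (rule sum.group[symmetric]) (auto simp: assms card_mono)
  also have "\<dots> = (\<Sum>p\<le>card A. of_nat (card {Q. Q \<subseteq> A \<and> card Q = p}) * g p)"
    by (intro sum.cong refl) simp
  finally show ?thesis by (simp add: n_subsets[OF assms])
qed

text \<open>The terms with \<open>card Q = 1\<close> are the ones killed by centring.\<close>

lemma sum_subsets_fact_power_le:
  assumes "finite A" "(t::real) \<ge> 0"
  shows "(\<Sum>Q\<in>Pow A. if card Q = 1 then 0 else fact (card A - card Q) * t ^ card Q)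
           \<le> fact (card A) * exp (t^2)"
proof -
  let ?m = "card A"
  have "(\<Sum>Q\<in>Pow A. if card Q = 1 then 0 else fact (?m - card Q) * t ^ card Q)
      = (\<Sum>p\<le>?m. of_nat (?m choose p) * (if p = 1 then 0 else fact (?m - p) * t ^ p))"
    by (rule sum_Pow_card[OF assms(1)])
  also have "\<dots> = (\<Sum>p\<le>?m. fact ?m * (if p = 1 then 0 else t ^ p / fact p))"
  proof (rule sum.cong[OF refl])
    fix p assume "p \<in> {..?m}"
    then have "of_nat (?m choose p) * fact (?m - p) = (fact ?m / fact p :: real)"
      by (simp add: binomial_fact)
    then show "of_nat (?m choose p) * (if p = 1 then 0 else fact (?m - p) * t ^ p)
        = fact ?m * (if p = 1 then 0 else t ^ p / fact p :: real)"
      by (auto simp: field_simps)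
  qed
  also have "\<dots> \<le> fact ?m * exp (t^2)"
    unfolding sum_distrib_left[symmetric]
    by (rule mult_left_mono[OF sum_exp_series_no_linear_le[OF assms(2)]]) simp
  finally show ?thesis .
qed

text \<open>A slot of a word is either a fixed matrix \<open>Inl C\<close> or the variable matrix \<open>S\<close>,
transposed for \<open>Inr True\<close>.\<close>

type_synonym slot = "mat + bool"

definition slot_val :: "mat \<Rightarrow> slot \<Rightarrow> mat" where
  "slot_val S s = (case s of Inl C \<Rightarrow> C | Inr t \<Rightarrow> if t then mT S else S)"

abbreviation word :: "nat \<Rightarrow> nat \<Rightarrow> (nat \<Rightarrow> slot) \<Rightarrow> mat \<Rightarrow> mat" where
  "word d L sl S \<equiv> mprod d L (\<lambda>i. slot_val S (sl i))"

definition rand_slots :: "(nat \<Rightarrow> slot) \<Rightarrow> nat \<Rightarrow> nat set" where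
  "rand_slots sl L = {i. i < L \<and> \<not> isl (sl i)}"

definition fixed_slots :: "(nat \<Rightarrow> slot) \<Rightarrow> nat \<Rightarrow> nat set" where
  "fixed_slots sl L = {i. i < L \<and> isl (sl i)}"

definition fixed_norm :: "nat \<Rightarrow> (nat \<Rightarrow> slot) \<Rightarrow> nat \<Rightarrow> real" where
  "fixed_norm d sl L = (\<Prod>i\<in>fixed_slots sl L. specnorm d (projl (sl i)))"

definition batch_sum :: "(nat \<Rightarrow> mat) \<Rightarrow> nat \<Rightarrow> (nat \<Rightarrow> nat) \<Rightarrow> mat" where
  "batch_sum Y b B = (\<Sum>k<b. Y (B k))"

definition fix_slots :: "(nat \<Rightarrow> slot) \<Rightarrow> nat set \<Rightarrow> mat \<Rightarrow> nat \<Rightarrow> slot" where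
  "fix_slots sl Q T = (\<lambda>i. if i \<in> Q then Inl (slot_val T (sl i)) else sl i)"

lemma finite_rand_slots[simp]: "finite (rand_slots sl L)"
  unfolding rand_slots_def by simp

lemma finite_fixed_slots[simp]: "finite (fixed_slots sl L)"
  unfolding fixed_slots_def by simp

lemma specnorm_slot_val_rand: "\<not> isl s \<Longrightarrow> specnorm d (slot_val S s) = specnorm d S"
  by (cases s) (auto simp: slot_val_def specnorm_mT)

lemma slot_val_fixed: "isl s \<Longrightarrow> slot_val S s = projl s"
  by (cases s) (auto simp: slot_val_def)

lemma fixed_norm_nonneg: "0 \<le> fixed_norm d sl L"
  unfolding fixed_norm_def by (rule prod_nonneg) simp

lemma prod_specnorm_slot_val:
  "(\<Prod>i<L. specnorm d (slot_val S (sl i))) = fixed_norm d sl L * specnorm d S ^ card (rand_slots sl L)"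
proof -
  have u: "{..<L} = fixed_slots sl L \<union> rand_slots sl L" unfolding fixed_slots_def rand_slots_def by auto
  have disj: "fixed_slots sl L \<inter> rand_slots sl L = {}" unfolding fixed_slots_def rand_slots_def by auto
  have "(\<Prod>i<L. specnorm d (slot_val S (sl i))) = (\<Prod>i\<in>fixed_slots sl L. specnorm d (slot_val S (sl i))) * (\<Prod>i\<in>rand_slots sl L. specnorm d (slot_val S (sl i)))"
    unfolding u by (rule prod.union_disjoint) (simp_all add: disj)
  also have "(\<Prod>i\<in>fixed_slots sl L. specnorm d (slot_val S (sl i))) = fixed_norm d sl L"
    unfolding fixed_norm_def by (rule prod.cong) (auto simp: fixed_slots_def slot_val_fixed)
  also have "(\<Prod>i\<in>rand_slots sl L. specnorm d (slot_val S (sl i))) = (\<Prod>i\<in>rand_slots sl L. specnorm d S)"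
    by (rule prod.cong) (auto simp: rand_slots_def specnorm_slot_val_rand)
  finally show ?thesis by simp
qed

lemma abs_mtr_word_le:
  "\<bar>mtr d (word d L sl S)\<bar> \<le> real d * (fixed_norm d sl L * specnorm d S ^ card (rand_slots sl L))"
proof -
  have "\<bar>mtr d (word d L sl S)\<bar> \<le> real d * specnorm d (word d L sl S)"
    by (rule abs_mtr_le)
  also have "\<dots> \<le> real d * (\<Prod>i<L. specnorm d (slot_val S (sl i)))"
    by (rule mult_left_mono[OF specnorm_mprod]) simp
  finally show ?thesis unfolding prod_specnorm_slot_val .
qed

lemma batch_sum_upd: "batch_sum Y (Suc b) (B(b := c)) = batch_sum Y b B + Y c"
  unfolding batch_sum_def by (simp add: lessThan_Suc add.commute)

lemma slot_val_add: "slot_val (S + T) s = (if isl s then slot_val S s else slot_val S s + slot_val T s)"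
  by (cases s) (auto simp: slot_val_def mT_add)

lemma mtr_word_add_expand:
  "mtr d (word d L sl (S + T))
   = (\<Sum>Q\<in>Pow (rand_slots sl L). mtr d (word d L (fix_slots sl Q T) S))"
proof -
  have "(\<lambda>i. slot_val (S + T) (sl i)) = (\<lambda>i. if i \<in> {i. \<not> isl (sl i)} then slot_val S (sl i) + slot_val T (sl i) else slot_val S (sl i))"
    by (auto simp: slot_val_add)
  then have "word d L sl (S + T)
     = (\<Sum>Q\<in>Pow ({i. \<not> isl (sl i)} \<inter> {..<L}). mprod d L (\<lambda>i. if i \<in> Q then slot_val T (sl i) else slot_val S (sl i)))"
    by (simp only: mprod_expand)
  also have "{i. \<not> isl (sl i)} \<inter> {..<L} = rand_slots sl L" unfolding rand_slots_def by auto
  also have "(\<lambda>Q. mprod d L (\<lambda>i. if i \<in> Q then slot_val T (sl i) else slot_val S (sl i))) = (\<lambda>Q. word d L (fix_slots sl Q T) S)"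
  proof -
    have "(\<lambda>i. if i \<in> Q then slot_val T (sl i) else slot_val S (sl i)) = (\<lambda>i. slot_val S (fix_slots sl Q T i))" for Q
      by (rule ext) (simp add: fix_slots_def slot_val_def)
    then show ?thesis by simp
  qed
  finally show ?thesis unfolding mtr_sum[symmetric] by (rule arg_cong)
qed

lemma rand_slots_fix_slots: "rand_slots (fix_slots sl Q T) L = rand_slots sl L - Q"
  unfolding rand_slots_def fix_slots_def by auto

lemma fixed_norm_fix_slots:
  assumes "Q \<subseteq> rand_slots sl L"
  shows "fixed_norm d (fix_slots sl Q T) L = fixed_norm d sl L * specnorm d T ^ card Q"
proof -
  have u: "fixed_slots (fix_slots sl Q T) L = fixed_slots sl L \<union> Q" using assms unfolding fixed_slots_def rand_slots_def fix_slots_def by auto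
  have disj: "fixed_slots sl L \<inter> Q = {}" using assms unfolding fixed_slots_def rand_slots_def by auto
  have fQ: "finite Q" using assms finite_subset finite_rand_slots by blast
  have "fixed_norm d (fix_slots sl Q T) L = (\<Prod>i\<in>fixed_slots sl L. specnorm d (projl (fix_slots sl Q T i))) * (\<Prod>i\<in>Q. specnorm d (projl (fix_slots sl Q T i)))"
    unfolding fixed_norm_def u by (rule prod.union_disjoint) (simp_all add: disj fQ)
  also have "(\<Prod>i\<in>fixed_slots sl L. specnorm d (projl (fix_slots sl Q T i))) = fixed_norm d sl L"
    unfolding fixed_norm_def using disj by (intro prod.cong) (auto simp: fix_slots_def)
  also have "(\<Prod>i\<in>Q. specnorm d (projl (fix_slots sl Q T i))) = (\<Prod>i\<in>Q. specnorm d T)"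
    using assms by (intro prod.cong) (auto simp: fix_slots_def rand_slots_def specnorm_slot_val_rand)
  finally show ?thesis by simp
qed

lemma EB_Suc_mtr_word:
  assumes n: "0 < n"
  shows "EB n (Suc b) (\<lambda>B. mtr d (word d L sl (batch_sum Y (Suc b) B)))
    = (\<Sum>Q\<in>Pow (rand_slots sl L).
         (\<Sum>c<n. EB n b (\<lambda>B. mtr d (word d L (fix_slots sl Q (Y c)) (batch_sum Y b B)))) / real n)"
proof -
  let ?g = "\<lambda>Q c B. mtr d (word d L (fix_slots sl Q (Y c)) (batch_sum Y b B))"
  have "EB n (Suc b) (\<lambda>B. mtr d (word d L sl (batch_sum Y (Suc b) B)))
      = (\<Sum>c<n. EB n b (\<lambda>B. \<Sum>Q\<in>Pow (rand_slots sl L). ?g Q c B)) / real n"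
    unfolding EB_Suc[OF n] batch_sum_upd mtr_word_add_expand ..
  also have "\<dots> = (\<Sum>c<n. \<Sum>Q\<in>Pow (rand_slots sl L). EB n b (?g Q c)) / real n"
    by (simp add: EB_sum)
  also have "\<dots> = (\<Sum>Q\<in>Pow (rand_slots sl L). (\<Sum>c<n. EB n b (?g Q c)) / real n)"
    by (subst sum.swap) (simp add: sum_divide_distrib)
  finally show ?thesis .
qed

lemma sum_mtr_word_fix_singleton:
  assumes Y0: "meq d (\<Sum>c<n. Y c) (\<lambda>_ _. 0)" and i: "i \<in> rand_slots sl L"
  shows "(\<Sum>c<n. mtr d (word d L (fix_slots sl {i} (Y c)) S)) = 0"
proof -
  have iL: "i < L" and ir: "\<not> isl (sl i)" using i unfolding rand_slots_def by auto
  let ?F = "\<lambda>j. slot_val S (sl j)"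
  have "(\<lambda>j. slot_val S (fix_slots sl {i} (Y c) j)) = ?F(i := slot_val (Y c) (sl i))" for c
    unfolding fix_slots_def by (auto simp: slot_val_def)
  then have "(\<Sum>c<n. mtr d (word d L (fix_slots sl {i} (Y c)) S))
      = mtr d (\<Sum>c<n. mprod d L (?F(i := slot_val (Y c) (sl i))))"
    by (simp add: mtr_sum)
  also have "\<dots> = mtr d (mprod d L (?F(i := \<Sum>c<n. slot_val (Y c) (sl i))))"
    by (simp add: mprod_lin[OF iL])
  also have "mprod d L (?F(i := \<Sum>c<n. slot_val (Y c) (sl i))) = (\<lambda>_ _. 0)"
  proof (rule mprod_zero_slot[OF iL])
    obtain tf where "sl i = Inr tf" using ir by (cases "sl i") auto
    then have "(\<Sum>c<n. slot_val (Y c) (sl i)) = (if tf then mT (\<Sum>c<n. Y c) else (\<Sum>c<n. Y c))"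
      by (auto simp: slot_val_def mT_sum)
    then show "meq d ((?F(i := \<Sum>c<n. slot_val (Y c) (sl i))) i) (\<lambda>_ _. 0)"
      using Y0 by (auto simp: meq_def mT_def)
  qed
  finally show ?thesis by (simp add: mtr_def)
qed

lemma word_bound_fix_slots_le:
  fixes R t E :: real
  assumes Q: "Q \<subseteq> rand_slots sl L" and T: "specnorm d T \<le> R" and t: "0 < t" and E: "0 \<le> E"
  defines "m \<equiv> card (rand_slots sl L)"
  shows "real d * fixed_norm d (fix_slots sl Q T) L * R ^ (m - card Q) * fact (m - card Q) * E
           / t ^ (m - card Q)
         \<le> real d * fixed_norm d sl L * R ^ m * E / t ^ m * (fact (m - card Q) * t ^ card Q)"
proof -
  have q: "card Q \<le> m" unfolding m_def using Q by (simp add: card_mono)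
  have R: "0 \<le> R" using T specnorm_nonneg order_trans by blast
  have "real d * fixed_norm d (fix_slots sl Q T) L * R ^ (m - card Q) * fact (m - card Q) * E
        / t ^ (m - card Q)
      \<le> real d * (fixed_norm d sl L * R ^ card Q) * R ^ (m - card Q) * fact (m - card Q) * E
        / t ^ (m - card Q)"
    unfolding fixed_norm_fix_slots[OF Q] using T R t E fixed_norm_nonneg[of d sl L]
    by (intro divide_right_mono mult_right_mono mult_left_mono power_mono) auto
  also have "\<dots> = real d * fixed_norm d sl L * R ^ m * E / t ^ m * (fact (m - card Q) * t ^ card Q)"
    using q t by (simp add: power_add[symmetric] power_diff field_simps)
  finally show ?thesis .
qed

lemma abs_mean_EB_mtr_word_fix_slots_le:
  fixes Y :: "nat \<Rightarrow> mat"
  assumes n: "0 < n" and YR: "\<And>c. c < n \<Longrightarrow> specnorm d (Y c) \<le> R" and t: "0 < t"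
    and Q: "Q \<subseteq> rand_slots sl L"
    and IH: "\<And>sl. \<bar>EB n b (\<lambda>B. mtr d (word d L sl (batch_sum Y b B)))\<bar>
       \<le> real d * fixed_norm d sl L * R ^ card (rand_slots sl L) * fact (card (rand_slots sl L))
          * exp (real b * t^2) / t ^ card (rand_slots sl L)"
  defines "m \<equiv> card (rand_slots sl L)"
  shows "\<bar>(\<Sum>c<n. EB n b (\<lambda>B. mtr d (word d L (fix_slots sl Q (Y c)) (batch_sum Y b B)))) / real n\<bar>
     \<le> real d * fixed_norm d sl L * R ^ m * exp (real b * t^2) / t ^ m * (fact (m - card Q) * t ^ card Q)"
    (is "_ \<le> ?K")
proof -
  have card: "card (rand_slots (fix_slots sl Q (Y c)) L) = m - card Q" for c
    unfolding rand_slots_fix_slots m_def using Q by (simp add: card_Diff_subset finite_subset)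
  have "\<bar>EB n b (\<lambda>B. mtr d (word d L (fix_slots sl Q (Y c)) (batch_sum Y b B)))\<bar> \<le> ?K"
    if c: "c < n" for c
    using IH[of "fix_slots sl Q (Y c)"] word_bound_fix_slots_le[OF Q YR[OF c] t, of "exp (real b * t^2)"]
    unfolding card m_def by simp
  then have "(\<Sum>c<n. \<bar>EB n b (\<lambda>B. mtr d (word d L (fix_slots sl Q (Y c)) (batch_sum Y b B)))\<bar>) / real n
      \<le> (\<Sum>c<n. ?K) / real n"
    by (intro divide_right_mono sum_mono) auto
  also have "\<dots> = ?K" using n by simp
  finally show ?thesis by (rule order_trans[rotated]) (simp add: abs_divide divide_right_mono sum_abs)
qed

lemma EB_mtr_word_le:
  fixes Y :: "nat \<Rightarrow> mat"
  assumes n: "0 < n" and Y0: "meq d (\<Sum>c<n. Y c) (\<lambda>_ _. 0)"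
    and YR: "\<And>c. c < n \<Longrightarrow> specnorm d (Y c) \<le> R" and t: "0 < t"
  shows "\<bar>EB n b (\<lambda>B. mtr d (word d L sl (batch_sum Y b B)))\<bar>
     \<le> real d * fixed_norm d sl L * R ^ card (rand_slots sl L) * fact (card (rand_slots sl L))
        * exp (real b * t^2) / t ^ card (rand_slots sl L)"
proof (induction b arbitrary: sl)
  case 0
  let ?m = "card (rand_slots sl L)"
  have R: "0 \<le> R" using YR[OF n] specnorm_nonneg[of d "Y 0"] by linarith
  have "\<bar>EB n 0 (\<lambda>B. mtr d (word d L sl (batch_sum Y 0 B)))\<bar> \<le> real d * (fixed_norm d sl L * 0 ^ ?m)"
    using abs_mtr_word_le[of d L 0 sl] specnorm_zero[of d 0] by (simp add: EB_0 batch_sum_def meq_def)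
  also have "\<dots> \<le> real d * fixed_norm d sl L * R ^ ?m * fact ?m * exp (real 0 * t^2) / t ^ ?m"
    using R t fixed_norm_nonneg[of d sl L]
    by (cases "?m = 0") (auto simp: power_0_left intro!: divide_nonneg_pos mult_nonneg_nonneg)
  finally show ?case .
next
  case (Suc b)
  let ?m = "card (rand_slots sl L)"
  let ?X = "\<lambda>Q. (\<Sum>c<n. EB n b (\<lambda>B. mtr d (word d L (fix_slots sl Q (Y c)) (batch_sum Y b B)))) / real n"
  define K where "K = real d * fixed_norm d sl L * R ^ ?m * exp (real b * t^2) / t ^ ?m"
  have R: "0 \<le> R" using YR[OF n] specnorm_nonneg[of d "Y 0"] by linarith
  have "\<bar>?X Q\<bar> \<le> K * (if card Q = 1 then 0 else fact (?m - card Q) * t ^ card Q)"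
    if Q: "Q \<in> Pow (rand_slots sl L)" for Q
  proof (cases "card Q = 1")
    case True
    then obtain i where "Q = {i}" "i \<in> rand_slots sl L" using Q card_1_singletonE by blast
    then have "?X Q = 0"
      using EB_sum[of n b "\<lambda>c B. mtr d (word d L (fix_slots sl Q (Y c)) (batch_sum Y b B))" "{..<n}"]
        sum_mtr_word_fix_singleton[OF Y0] EB_const[OF n] by simp
    then show ?thesis using True by (metis abs_zero mult_zero_right order_refl)
  next
    case False
    then show ?thesis
      using abs_mean_EB_mtr_word_fix_slots_le[OF n YR t _ Suc.IH] Q unfolding K_def by simp
  qed
  then have "\<bar>EB n (Suc b) (\<lambda>B. mtr d (word d L sl (batch_sum Y (Suc b) B)))\<bar>
      \<le> (\<Sum>Q\<in>Pow (rand_slots sl L). K * (if card Q = 1 then 0 else fact (?m - card Q) * t ^ card Q))"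
    unfolding EB_Suc_mtr_word[OF n] by (intro order_trans[OF sum_abs] sum_mono)
  also have "\<dots> \<le> K * (fact ?m * exp (t^2))"
    unfolding sum_distrib_left[symmetric] using t R fixed_norm_nonneg[of d sl L]
    by (intro mult_left_mono sum_subsets_fact_power_le) (auto simp: K_def)
  also have "\<dots> = real d * fixed_norm d sl L * R ^ ?m * fact ?m * exp (real (Suc b) * t^2) / t ^ ?m"
    unfolding K_def by (simp add: exp_add[symmetric] distrib_right)
  finally show ?case .
qed

text \<open>\<open>gram_pow d (Suc k) S = (S^T S)^(2^k)\<close>.\<close>

fun gram_pow :: "nat \<Rightarrow> nat \<Rightarrow> mat \<Rightarrow> mat" where
  "gram_pow d 0 S = mprod d 1 (\<lambda>_. S)"
| "gram_pow d (Suc k) S = mmul d (mT (gram_pow d k S)) (gram_pow d k S)"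

definition slot_flip :: "slot \<Rightarrow> slot" where
  "slot_flip s = (case s of Inl C \<Rightarrow> Inl C | Inr t \<Rightarrow> Inr (\<not> t))"

lemma mT_slot_val_flip: "\<not> isl s \<Longrightarrow> mT (slot_val S s) = slot_val S (slot_flip s)"
  by (cases s) (auto simp: slot_val_def slot_flip_def)

lemma isl_slot_flip: "isl (slot_flip s) = isl s"
  by (cases s) (auto simp: slot_flip_def)

lemma gram_pow_word: "\<exists>w. (\<forall>i. \<not> isl (w i)) \<and> (\<forall>S. gram_pow d k S = word d (2^k) w S)"
proof (induction k)
  case 0
  show ?case by (rule exI[of _ "\<lambda>_. Inr False"]) (simp add: slot_val_def)
next
  case (Suc k)
  then obtain w where w: "\<forall>i. \<not> isl (w i)" "\<forall>S. gram_pow d k S = word d (2^k) w S" by blast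
  let ?h = "2^k :: nat"
  define w' where "w' i = (if i < ?h then slot_flip (w (?h - 1 - i)) else w (i - ?h))" for i
  have w'r: "\<forall>i. \<not> isl (w' i)" using w(1) unfolding w'_def by (simp add: isl_slot_flip)
  have "gram_pow d (Suc k) S = mprod d (2^Suc k) (\<lambda>i. slot_val S (w' i))" for S
  proof -
    have "gram_pow d (Suc k) S = mmul d (mprod d ?h (\<lambda>i. mT (slot_val S (w (?h - 1 - i))))) (word d ?h w S)"
      by (simp add: w(2) mT_mprod)
    also have "mprod d ?h (\<lambda>i. mT (slot_val S (w (?h - 1 - i)))) = word d ?h w' S"
      by (rule mprod_cong) (simp add: w'_def mT_slot_val_flip w(1))
    also have "word d ?h w S = mprod d ?h (\<lambda>i. slot_val S (w' (?h + i)))"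
      by (rule mprod_cong) (simp add: w'_def)
    also have "mmul d (word d ?h w' S) (mprod d ?h (\<lambda>i. slot_val S (w' (?h + i))))
        = mprod d (?h + ?h) (\<lambda>i. slot_val S (w' i))"
      by (rule mprod_append[symmetric])
    also have "?h + ?h = 2^Suc k" by simp
    finally show ?thesis .
  qed
  then show ?case using w'r by blast
qed

lemma specnorm_gram_pow: "specnorm d (gram_pow d k S) = specnorm d S ^ (2^k)"
proof (induction k)
  case 0
  have "specnorm d (mmul d (mident d) S) = specnorm d S" by (rule specnorm_cong[OF meq_mmul_mident_left])
  then show ?case by simp
next
  case (Suc k)
  then show ?case by (simp add: specnorm_mT_mmul_self power_mult[symmetric] mult.commute)
qed

lemma specnorm_pow_le_mtr_gram_pow: "specnorm d S ^ (2^Suc k) \<le> mtr d (gram_pow d (Suc k) S)"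
proof -
  have "specnorm d S ^ (2^Suc k) = (specnorm d (gram_pow d k S))^2"
    by (simp add: specnorm_gram_pow power_mult[symmetric] mult.commute)
  also have "\<dots> \<le> frob_sq d (gram_pow d k S)" by (rule specnorm_sq_le_frob_sq)
  also have "\<dots> = mtr d (gram_pow d (Suc k) S)" by (simp add: mtr_mT_mmul_self)
  finally show ?thesis .
qed

lemma EB_specnorm_pow_le:
  fixes Y :: "nat \<Rightarrow> mat"
  assumes n: "0 < n" and Y0: "meq d (\<Sum>c<n. Y c) (\<lambda>_ _. 0)"
    and YR: "\<And>c. c < n \<Longrightarrow> specnorm d (Y c) \<le> R" and t: "0 < t"
  shows "EB n b (\<lambda>B. specnorm d (batch_sum Y b B) ^ (2^Suc k))
     \<le> real d * R ^ (2^Suc k) * fact (2^Suc k) * exp (real b * t^2) / t ^ (2^Suc k)"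
proof -
  obtain w where w: "\<forall>i. \<not> isl (w i)" "\<forall>S. gram_pow d (Suc k) S = mprod d (2^Suc k) (\<lambda>i. slot_val S (w i))"
    using gram_pow_word by blast
  let ?M = "2^Suc k :: nat"
  have r: "rand_slots w ?M = {..<?M}" using w(1) unfolding rand_slots_def by auto
  have f: "fixed_norm d w ?M = 1" using w(1) unfolding fixed_norm_def fixed_slots_def by simp
  have "EB n b (\<lambda>B. specnorm d (batch_sum Y b B) ^ ?M) \<le> EB n b (\<lambda>B. mtr d (word d ?M w (batch_sum Y b B)))"
    by (rule EB_mono) (metis specnorm_pow_le_mtr_gram_pow w(2))
  also have "\<dots> \<le> \<bar>\<dots>\<bar>" by simp
  also have "\<dots> \<le> real d * fixed_norm d w ?M * R ^ card (rand_slots w ?M) * fact (card (rand_slots w ?M)) * exp (real b * t^2) / t ^ card (rand_slots w ?M)"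
    by (rule EB_mtr_word_le[OF n Y0 YR t])
  finally show ?thesis unfolding r f by simp
qed

lemma ex_pow2_between: "(x::real) \<ge> 1 \<Longrightarrow> \<exists>j. x \<le> 2^j \<and> 2^j < 2 * x"
proof -
  assume x: "x \<ge> 1"
  obtain N where "x < 2^N" using real_arch_pow[of "2::real" x] by auto
  then have ex: "\<exists>j. x \<le> 2^j" by (auto intro: less_imp_le)
  define j where "j = (LEAST j. x \<le> (2::real)^j)"
  have j1: "x \<le> 2^j" unfolding j_def by (rule LeastI_ex[OF ex])
  have "2^j < 2 * x"
  proof (cases j)
    case 0 then show ?thesis using x by simp
  next
    case (Suc j')
    then have "\<not> x \<le> 2^j'" using not_less_Least[of j' "\<lambda>j. x \<le> (2::real)^j"] unfolding j_def by simp
    then show ?thesis using Suc by simp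
  qed
  then show ?thesis using j1 by blast
qed


text \<open>The choice \<open>t^2 = h/b\<close> balances \<open>exp(b t^2)\<close> against \<open>t^(-2h)\<close>; with \<open>(2h)! \<le> (2h)^(2h)\<close>
and \<open>d \<le> exp h\<close> the bound becomes \<open>(4 e^2 h b R^2)^h\<close>.\<close>

lemma EB_specnorm_batch_sum_pow_le:
  fixes Y :: "nat \<Rightarrow> mat"
  assumes n: "0 < n" and Y0: "meq d (\<Sum>c<n. Y c) (\<lambda>_ _. 0)"
    and YR: "\<And>c. c < n \<Longrightarrow> specnorm d (Y c) \<le> R"
    and b: "1 \<le> b" and h: "h = 2^k" and d: "real d \<le> exp (real h)"
  shows "EB n b (\<lambda>B. specnorm d (batch_sum Y b B) ^ (2*h))
           \<le> sqrt (4 * exp 2 * real h * real b * R^2) ^ (2*h)"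
proof -
  have hpos: "real h > 0" and bpos: "real b > 0" using h b by simp_all
  define t where "t = sqrt (real h / real b)"
  have t: "t > 0" "t^2 = real h / real b" unfolding t_def using hpos bpos by simp_all
  have "EB n b (\<lambda>B. specnorm d (batch_sum Y b B) ^ (2*h))
      \<le> real d * R ^ (2*h) * fact (2*h) * exp (real b * t^2) / t ^ (2*h)"
    using EB_specnorm_pow_le[OF n Y0 YR t(1), of b k] h by simp
  also have "\<dots> = real d * (R^2)^h * fact (2*h) * exp (real h) * (real b / real h)^h"
  proof -
    have e1: "R^(2*h) = (R^2)^h" by (simp add: power_mult)
    have e2: "t^(2*h) = (real h / real b)^h" by (simp add: power_mult t(2))
    have e3: "real b * t^2 = real h" using t(2) bpos by simp
    show ?thesis unfolding e1 e2 e3 using hpos bpos by (simp add: power_divide field_simps)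
  qed
  also have "\<dots> \<le> exp (real h) * (R^2)^h * (4 * real h ^ 2)^h * exp (real h) * (real b / real h)^h"
  proof -
    have "(fact (2*h) :: real) \<le> of_nat ((2*h)^(2*h))" by (rule fact_le_power)
    also have "\<dots> = (4 * real h ^ 2)^h" by (simp add: power_mult power_mult_distrib)
    finally show ?thesis using d bpos hpos by (intro mult_right_mono mult_mono) auto
  qed
  also have "\<dots> = (exp (real h) * exp (real h)) * ((R^2) * (4 * real h ^ 2) * (real b / real h))^h"
    by (simp only: power_mult_distrib mult.assoc mult.commute mult.left_commute)
  also have "\<dots> = (4 * exp 2 * real h * real b * R^2)^h"
  proof -
    have "exp (real h) * exp (real h) = exp 2 ^ h"
      by (simp add: exp_add[symmetric] exp_of_nat_mult[symmetric] mult.commute)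
    moreover have "(R^2) * (4 * real h ^ 2) * (real b / real h) = 4 * real h * real b * R^2"
      using hpos by (simp add: power2_eq_square field_simps)
    ultimately show ?thesis by (simp add: power_mult_distrib ac_simps)
  qed
  also have "\<dots> = sqrt (4 * exp 2 * real h * real b * R^2) ^ (2*h)"
    by (simp add: power_mult)
  finally show ?thesis .
qed

lemma ln_le_pow2_le_six_ln:
  assumes d: "2 \<le> d"
  obtains h :: nat where "ln (real d) \<le> real h" "real h \<le> 6 * ln (real d)" "\<exists>k. h = 2^k" "2 \<le> h"
proof -
  let ?l = "ln (real d)"
  have "ln 2 \<le> ?l" using d by simp
  then have l23: "2/3 \<le> ?l" using ln2_ge_two_thirds by linarith
  obtain j where j: "max 1 ?l \<le> 2^j" "2^j < 2 * max 1 ?l" using ex_pow2_between[of "max 1 ?l"] by auto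
  show thesis
  proof
    have "?l \<le> 2^j" "(0::real) \<le> 2^j" "real ((2::nat)^Suc j) = 2 * 2^j" using j(1) by simp_all
    then show "?l \<le> real (2^Suc j)" by linarith
    show "real (2^Suc j) \<le> 6 * ?l" using j(2) l23 by (simp add: max_def split: if_splits)
    show "\<exists>k. (2::nat)^Suc j = 2^k" by blast
    show "2 \<le> (2::nat)^Suc j" by simp
  qed
qed

lemma EB_specnorm_batch_sum_cube_le:
  fixes Y :: "nat \<Rightarrow> mat"
  assumes n: "0 < n" and Y0: "meq d (\<Sum>c<n. Y c) (\<lambda>_ _. 0)"
    and YR: "\<And>c. c < n \<Longrightarrow> specnorm d (Y c) \<le> R"
    and b: "1 \<le> b" and d: "2 \<le> d"
  shows "EB n b (\<lambda>B. specnorm d (batch_sum Y b B) ^ 3)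
           \<le> 2 * sqrt (24 * exp 2 * ln (real d) * real b * R^2) ^ 3"
proof -
  obtain h :: nat where h: "ln (real d) \<le> real h" "real h \<le> 6 * ln (real d)" "\<exists>k. h = 2^k" "2 \<le> h"
    using ln_le_pow2_le_six_ln[OF d] by blast
  have "real d = exp (ln (real d))" using d by simp
  also have "\<dots> \<le> exp (real h)" using h(1) by simp
  finally have "real d \<le> exp (real h)" .
  then have "EB n b (\<lambda>B. specnorm d (batch_sum Y b B) ^ (2*h))
      \<le> sqrt (4 * exp 2 * real h * real b * R^2) ^ (2*h)"
    using h(3) EB_specnorm_batch_sum_pow_le[OF n Y0 YR b] by blast
  then have "EB n b (\<lambda>B. specnorm d (batch_sum Y b B) ^ 3) \<le> 2 * sqrt (4 * exp 2 * real h * real b * R^2) ^ 3"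
    using h(4) by (intro EB_cube_le_of_moment[OF n]) simp_all
  also have "\<dots> \<le> 2 * sqrt (24 * exp 2 * ln (real d) * real b * R^2) ^ 3"
    using h(2) by (intro mult_left_mono power_mono real_sqrt_le_mono mult_right_mono) auto
  finally show ?thesis .
qed

section \<open>Gradients and Hessians\<close>

lemma eq_if_abs_diff_le_all: "(\<And>e. e > 0 \<Longrightarrow> \<bar>a - b\<bar> \<le> 2 * e) \<Longrightarrow> (a::real) = b"
proof (rule ccontr)
  assume h: "\<And>e. e > 0 \<Longrightarrow> \<bar>a - b\<bar> \<le> 2 * e" and ne: "a \<noteq> b"
  then have "\<bar>a - b\<bar> \<le> 2 * (\<bar>a - b\<bar> / 4)" using h[of "\<bar>a - b\<bar> / 4"] by simp
  then show False using ne by simp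
qed

lemma has_grad_unique:
  assumes g: "has_grad d f g x" and g': "has_grad d f g' x" and j: "j < d"
  shows "g j = g' j"
proof (rule eq_if_abs_diff_le_all)
  fix e :: real assume e: "e > 0"
  obtain r1 where r1: "r1 > 0" "\<forall>h\<in>Rd d. vnorm d h < r1 \<longrightarrow> \<bar>f (x + h) - f x - vinner d g h\<bar> \<le> e * vnorm d h"
    using g e unfolding has_grad_def by blast
  obtain r2 where r2: "r2 > 0" "\<forall>h\<in>Rd d. vnorm d h < r2 \<longrightarrow> \<bar>f (x + h) - f x - vinner d g' h\<bar> \<le> e * vnorm d h"
    using g' e unfolding has_grad_def by blast
  define s where "s = min r1 r2 / 2"
  have s: "s > 0" "s < r1" "s < r2" unfolding s_def using r1 r2 by auto
  let ?h = "unit_vec j s"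
  have hR: "?h \<in> Rd d" by (rule unit_vec_Rd[OF j])
  have hn: "vnorm d ?h = s" using vnorm_unit_vec[OF j] s by simp
  have a1: "\<bar>f (x + ?h) - f x - g j * s\<bar> \<le> e * s" using r1(2) hR hn s vinner_unit_vec[OF j] by auto
  have a2: "\<bar>f (x + ?h) - f x - g' j * s\<bar> \<le> e * s" using r2(2) hR hn s vinner_unit_vec[OF j] by auto
  have "\<bar>g j - g' j\<bar> * s \<le> 2 * e * s"
  proof -
    have "\<bar>(f (x + ?h) - f x - g' j * s) - (f (x + ?h) - f x - g j * s)\<bar> = \<bar>(g j - g' j) * s\<bar>"
      by (simp add: algebra_simps)
    also have "\<dots> = \<bar>g j - g' j\<bar> * s" using s by (simp add: abs_mult)
    finally have "\<bar>g j - g' j\<bar> * s = \<bar>(f (x + ?h) - f x - g' j * s) - (f (x + ?h) - f x - g j * s)\<bar>" by simp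
    also have "\<dots> \<le> 2 * e * s" using a1 a2 by linarith
    finally show ?thesis .
  qed
  then show "\<bar>g j - g' j\<bar> \<le> 2 * e" using s by simp
qed

lemma has_jac_unique:
  assumes H: "has_jac d G H x" and H': "has_jac d G H' x" and i: "i < d" and j: "j < d"
  shows "H i j = H' i j"
proof (rule eq_if_abs_diff_le_all)
  fix e :: real assume e: "e > 0"
  obtain r1 where r1: "r1 > 0" "\<forall>h\<in>Rd d. vnorm d h < r1 \<longrightarrow> vnorm d (G (x + h) - G x - mv d H h) \<le> e * vnorm d h"
    using H e unfolding has_jac_def by blast
  obtain r2 where r2: "r2 > 0" "\<forall>h\<in>Rd d. vnorm d h < r2 \<longrightarrow> vnorm d (G (x + h) - G x - mv d H' h) \<le> e * vnorm d h"
    using H' e unfolding has_jac_def by blast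
  define s where "s = min r1 r2 / 2"
  have s: "s > 0" "s < r1" "s < r2" unfolding s_def using r1 r2 by auto
  let ?h = "unit_vec j s"
  have hR: "?h \<in> Rd d" by (rule unit_vec_Rd[OF j])
  have hn: "vnorm d ?h = s" using vnorm_unit_vec[OF j] s by simp
  have a1: "\<bar>(G (x + ?h) - G x - mv d H ?h) i\<bar> \<le> e * s"
    using r1(2) hR hn s abs_coord_le_vnorm[OF i, of "G (x + ?h) - G x - mv d H ?h"] by auto
  have a2: "\<bar>(G (x + ?h) - G x - mv d H' ?h) i\<bar> \<le> e * s"
    using r2(2) hR hn s abs_coord_le_vnorm[OF i, of "G (x + ?h) - G x - mv d H' ?h"] by auto
  have "\<bar>H i j - H' i j\<bar> * s \<le> 2 * e * s"
  proof -
    have "\<bar>(G (x + ?h) - G x - mv d H' ?h) i - (G (x + ?h) - G x - mv d H ?h) i\<bar> = \<bar>(H i j - H' i j) * s\<bar>"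
      by (simp add: mv_unit_vec[OF i j] algebra_simps)
    also have "\<dots> = \<bar>H i j - H' i j\<bar> * s" using s by (simp add: abs_mult)
    finally have "\<bar>H i j - H' i j\<bar> * s = \<bar>(G (x + ?h) - G x - mv d H' ?h) i - (G (x + ?h) - G x - mv d H ?h) i\<bar>" by simp
    also have "\<dots> \<le> 2 * e * s" using a1 a2 by linarith
    finally show ?thesis .
  qed
  then show "\<bar>H i j - H' i j\<bar> \<le> 2 * e" using s by simp
qed

lemma grad_eq: "has_grad d f g x \<Longrightarrow> j < d \<Longrightarrow> grad d f x j = g j"
proof -
  assume g: "has_grad d f g x" and j: "j < d"
  have "has_grad d f (SOME g. has_grad d f g x) x" using g by (rule someI[where P="\<lambda>g. has_grad d f g x"])
  then show ?thesis unfolding grad_def using j has_grad_unique[OF _ g j] by simp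
qed

lemma grad_out: "j \<ge> d \<Longrightarrow> grad d f x j = 0" unfolding grad_def by simp

lemma vinner_cong: "(\<And>j. j < d \<Longrightarrow> g j = g' j) \<Longrightarrow> vinner d g h = vinner d g' h"
  unfolding vinner_def by simp

lemma has_grad_cong: "(\<And>j. j < d \<Longrightarrow> g j = g' j) \<Longrightarrow> has_grad d f g x \<Longrightarrow> has_grad d f g' x"
  unfolding has_grad_def using vinner_cong by metis

lemma has_grad_grad: "has_grad d f g x \<Longrightarrow> has_grad d f (grad d f x) x"
  by (rule has_grad_cong[of d g]) (auto simp: grad_eq)

lemma hess_jac: "has_jac d (grad d f) H x \<Longrightarrow> has_jac d (grad d f) (hess d f x) x"
  unfolding hess_def by (rule someI[where P="\<lambda>H. has_jac d (grad d f) H x"])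

lemma hess_eq: "has_jac d (grad d f) H x \<Longrightarrow> meq d (hess d f x) H"
  unfolding meq_def using has_jac_unique[OF hess_jac] by blast

lemma has_jac_cong_fun:
  assumes x: "x \<in> Rd d" and eq: "\<And>y. y \<in> Rd d \<Longrightarrow> G y = G' y" and j: "has_jac d G H x"
  shows "has_jac d G' H x"
proof -
  have "h \<in> Rd d \<Longrightarrow> x + h \<in> Rd d" for h using x unfolding Rd_def by auto
  then show ?thesis using j eq x unfolding has_jac_def by metis
qed

lemma has_grad_add:
  assumes "has_grad d f g x" "has_grad d f' g' x"
  shows "has_grad d (\<lambda>y. f y + f' y) (g + g') x"
  unfolding has_grad_def
proof (intro allI impI)
  fix e :: real assume e: "e > 0"
  obtain r1 where r1: "r1 > 0" "\<forall>h\<in>Rd d. vnorm d h < r1 \<longrightarrow> \<bar>f (x + h) - f x - vinner d g h\<bar> \<le> e/2 * vnorm d h"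
    using assms(1) e unfolding has_grad_def by (meson half_gt_zero)
  obtain r2 where r2: "r2 > 0" "\<forall>h\<in>Rd d. vnorm d h < r2 \<longrightarrow> \<bar>f' (x + h) - f' x - vinner d g' h\<bar> \<le> e/2 * vnorm d h"
    using assms(2) e unfolding has_grad_def by (meson half_gt_zero)
  have vi: "vinner d (g + g') h = vinner d g h + vinner d g' h" for h
    unfolding vinner_def by (simp add: sum.distrib algebra_simps)
  show "\<exists>r>0. \<forall>h\<in>Rd d. vnorm d h < r \<longrightarrow> \<bar>f (x + h) + f' (x + h) - (f x + f' x) - vinner d (g + g') h\<bar> \<le> e * vnorm d h"
  proof (intro exI[of _ "min r1 r2"] conjI ballI impI)
    show "min r1 r2 > 0" using r1 r2 by simp
    fix h assume h: "h \<in> Rd d" "vnorm d h < min r1 r2"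
    then have "\<bar>f (x + h) - f x - vinner d g h\<bar> \<le> e/2 * vnorm d h" "\<bar>f' (x + h) - f' x - vinner d g' h\<bar> \<le> e/2 * vnorm d h"
      using r1 r2 by auto
    then show "\<bar>f (x + h) + f' (x + h) - (f x + f' x) - vinner d (g + g') h\<bar> \<le> e * vnorm d h"
      unfolding vi by linarith
  qed
qed

lemma has_grad_scale:
  assumes "has_grad d f g x"
  shows "has_grad d (\<lambda>y. c * f y) (\<lambda>j. c * g j) x"
  unfolding has_grad_def
proof (intro allI impI)
  fix e :: real assume e: "e > 0"
  obtain r where r: "r > 0" "\<forall>h\<in>Rd d. vnorm d h < r \<longrightarrow> \<bar>f (x + h) - f x - vinner d g h\<bar> \<le> e / (\<bar>c\<bar> + 1) * vnorm d h"
    using assms e unfolding has_grad_def by (metis divide_pos_pos abs_ge_zero add_nonneg_pos zero_less_one)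
  have vi: "vinner d (\<lambda>j. c * g j) h = c * vinner d g h" for h
    unfolding vinner_def by (simp add: sum_distrib_left ac_simps)
  show "\<exists>r>0. \<forall>h\<in>Rd d. vnorm d h < r \<longrightarrow> \<bar>c * f (x + h) - c * f x - vinner d (\<lambda>j. c * g j) h\<bar> \<le> e * vnorm d h"
  proof (intro exI[of _ r] conjI ballI impI)
    show "r > 0" by (rule r(1))
    fix h assume h: "h \<in> Rd d" "vnorm d h < r"
    have "\<bar>c * f (x + h) - c * f x - vinner d (\<lambda>j. c * g j) h\<bar> = \<bar>c\<bar> * \<bar>f (x + h) - f x - vinner d g h\<bar>"
      unfolding vi by (simp add: abs_mult[symmetric] algebra_simps)
    also have "\<dots> \<le> \<bar>c\<bar> * (e / (\<bar>c\<bar> + 1) * vnorm d h)" using r h by (intro mult_left_mono) auto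
    also have "\<dots> \<le> e * vnorm d h"
    proof -
      have "\<bar>c\<bar> / (\<bar>c\<bar> + 1) \<le> 1" by simp
      then have "\<bar>c\<bar> / (\<bar>c\<bar> + 1) * (e * vnorm d h) \<le> 1 * (e * vnorm d h)"
        using e by (intro mult_right_mono) auto
      then show ?thesis by simp
    qed
    finally show "\<bar>c * f (x + h) - c * f x - vinner d (\<lambda>j. c * g j) h\<bar> \<le> e * vnorm d h" .
  qed
qed

lemma has_grad_zero: "has_grad d (\<lambda>y. 0) (\<lambda>j. 0) x"
  unfolding has_grad_def vinner_def by (auto intro: exI[of _ 1])

lemma has_grad_sum:
  fixes m :: nat
  assumes "\<And>k. k < m \<Longrightarrow> has_grad d (F k) (g k) x"
  shows "has_grad d (\<lambda>y. \<Sum>k<m. F k y) (\<lambda>j. \<Sum>k<m. g k j) x"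
  using assms
proof (induction m)
  case 0 then show ?case by (simp add: has_grad_zero)
next
  case (Suc m)
  have "has_grad d (\<lambda>y. (\<Sum>k<m. F k y) + F m y) ((\<lambda>j. \<Sum>k<m. g k j) + g m) x"
    using Suc by (intro has_grad_add) auto
  then show ?case by (simp add: plus_fun_def)
qed

lemma has_grad_average:
  assumes "\<And>k. k < m \<Longrightarrow> has_grad d (F k) (g k) x"
  shows "has_grad d (\<lambda>y. (\<Sum>k<m. F k y) / real m) (\<lambda>j. (\<Sum>k<m. g k j) / real m) x"
  using has_grad_scale[OF has_grad_sum[OF assms], where c="1 / real m"] by simp

lemma has_jac_add:
  assumes "has_jac d G H x" "has_jac d G' H' x"
  shows "has_jac d (\<lambda>y. G y + G' y) (H + H') x"
  unfolding has_jac_def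
proof (intro allI impI)
  fix e :: real assume e: "e > 0"
  obtain r1 where r1: "r1 > 0" "\<forall>h\<in>Rd d. vnorm d h < r1 \<longrightarrow> vnorm d (G (x + h) - G x - mv d H h) \<le> e/2 * vnorm d h"
    using assms(1) e unfolding has_jac_def by (meson half_gt_zero)
  obtain r2 where r2: "r2 > 0" "\<forall>h\<in>Rd d. vnorm d h < r2 \<longrightarrow> vnorm d (G' (x + h) - G' x - mv d H' h) \<le> e/2 * vnorm d h"
    using assms(2) e unfolding has_jac_def by (meson half_gt_zero)
  show "\<exists>r>0. \<forall>h\<in>Rd d. vnorm d h < r \<longrightarrow> vnorm d (G (x + h) + G' (x + h) - (G x + G' x) - mv d (H + H') h) \<le> e * vnorm d h"
  proof (intro exI[of _ "min r1 r2"] conjI ballI impI)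
    show "min r1 r2 > 0" using r1 r2 by simp
    fix h assume h: "h \<in> Rd d" "vnorm d h < min r1 r2"
    then have a: "vnorm d (G (x + h) - G x - mv d H h) \<le> e/2 * vnorm d h" "vnorm d (G' (x + h) - G' x - mv d H' h) \<le> e/2 * vnorm d h"
      using r1 r2 by auto
    have E: "G (x + h) + G' (x + h) - (G x + G' x) - mv d (H + H') h = (G (x + h) - G x - mv d H h) + (G' (x + h) - G' x - mv d H' h)"
      by (simp add: mv_add algebra_simps)
    have "vnorm d (G (x + h) + G' (x + h) - (G x + G' x) - mv d (H + H') h) \<le> vnorm d (G (x + h) - G x - mv d H h) + vnorm d (G' (x + h) - G' x - mv d H' h)"
      unfolding E by (rule vnorm_triangle)
    then show "vnorm d (G (x + h) + G' (x + h) - (G x + G' x) - mv d (H + H') h) \<le> e * vnorm d h"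
      using a by linarith
  qed
qed

lemma has_jac_scale:
  assumes "has_jac d G H x"
  shows "has_jac d (\<lambda>y j. c * G y j) (\<lambda>i j. c * H i j) x"
  unfolding has_jac_def
proof (intro allI impI)
  fix e :: real assume e: "e > 0"
  obtain r where r: "r > 0" "\<forall>h\<in>Rd d. vnorm d h < r \<longrightarrow> vnorm d (G (x + h) - G x - mv d H h) \<le> e / (\<bar>c\<bar> + 1) * vnorm d h"
    using assms e unfolding has_jac_def by (metis divide_pos_pos abs_ge_zero add_nonneg_pos zero_less_one)
  have mvs: "mv d (\<lambda>i j. c * H i j) h = (\<lambda>i. c * mv d H h i)" for h
    unfolding mv_def by (auto simp: sum_distrib_left ac_simps)
  show "\<exists>r>0. \<forall>h\<in>Rd d. vnorm d h < r \<longrightarrow> vnorm d ((\<lambda>j. c * G (x + h) j) - (\<lambda>j. c * G x j) - mv d (\<lambda>i j. c * H i j) h) \<le> e * vnorm d h"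
  proof (intro exI[of _ r] conjI ballI impI)
    show "r > 0" by (rule r(1))
    fix h assume h: "h \<in> Rd d" "vnorm d h < r"
    have "(\<lambda>j. c * G (x + h) j) - (\<lambda>j. c * G x j) - mv d (\<lambda>i j. c * H i j) h = (\<lambda>j. c * (G (x + h) - G x - mv d H h) j)"
      unfolding mvs by (simp add: fun_eq_iff algebra_simps)
    then have "vnorm d ((\<lambda>j. c * G (x + h) j) - (\<lambda>j. c * G x j) - mv d (\<lambda>i j. c * H i j) h) = \<bar>c\<bar> * vnorm d (G (x + h) - G x - mv d H h)"
      by (simp add: vnorm_scale fun_diff_def)
    also have "\<dots> \<le> \<bar>c\<bar> * (e / (\<bar>c\<bar> + 1) * vnorm d h)" using r h by (intro mult_left_mono) auto
    also have "\<dots> \<le> e * vnorm d h"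
    proof -
      have "\<bar>c\<bar> / (\<bar>c\<bar> + 1) \<le> 1" by simp
      then have "\<bar>c\<bar> / (\<bar>c\<bar> + 1) * (e * vnorm d h) \<le> 1 * (e * vnorm d h)"
        using e by (intro mult_right_mono) auto
      then show ?thesis by simp
    qed
    finally show "vnorm d ((\<lambda>j. c * G (x + h) j) - (\<lambda>j. c * G x j) - mv d (\<lambda>i j. c * H i j) h) \<le> e * vnorm d h" .
  qed
qed

lemma has_jac_zero: "has_jac d (\<lambda>y j. 0) (\<lambda>i j. 0) x"
  unfolding has_jac_def by (auto intro!: exI[of _ 1] simp: mv_def vnorm_def fun_diff_def sum_nonneg)

lemma has_jac_sum:
  fixes m :: nat
  assumes "\<And>k. k < m \<Longrightarrow> has_jac d (G k) (H k) x"
  shows "has_jac d (\<lambda>y j. \<Sum>k<m. G k y j) (\<lambda>i j. \<Sum>k<m. H k i j) x"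
  using assms
proof (induction m)
  case 0 then show ?case by (simp add: has_jac_zero)
next
  case (Suc m)
  have "has_jac d (\<lambda>y. (\<lambda>j. \<Sum>k<m. G k y j) + G m y) ((\<lambda>i j. \<Sum>k<m. H k i j) + H m) x"
    using Suc by (intro has_jac_add) auto
  then show ?case by (simp add: plus_fun_def)
qed

lemma has_jac_average:
  assumes "\<And>k. k < m \<Longrightarrow> has_jac d (G k) (H k) x"
  shows "has_jac d (\<lambda>y j. (\<Sum>k<m. G k y j) / real m) (\<lambda>i j. (\<Sum>k<m. H k i j) / real m) x"
  using has_jac_scale[OF has_jac_sum[OF assms], where c="1 / real m"] by simp

lemma has_real_derivative_of_bound:
  assumes "\<And>e. e > 0 \<Longrightarrow> \<exists>r>0. \<forall>s. s \<noteq> 0 \<and> \<bar>s\<bar> < r \<longrightarrow> \<bar>\<phi> (t + s) - \<phi> t - s * D\<bar> \<le> e * \<bar>s\<bar>"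
  shows "(\<phi> has_real_derivative D) (at t)"
  unfolding DERIV_def LIM_eq
proof (intro allI impI)
  fix r :: real assume r: "r > 0"
  obtain q where q: "q > 0" "\<forall>s. s \<noteq> 0 \<and> \<bar>s\<bar> < q \<longrightarrow> \<bar>\<phi> (t + s) - \<phi> t - s * D\<bar> \<le> r/2 * \<bar>s\<bar>"
    using assms[of "r/2"] r by auto
  show "\<exists>s>0. \<forall>x. x \<noteq> 0 \<and> norm (x - 0) < s \<longrightarrow> norm ((\<phi> (t + x) - \<phi> t) / x - D) < r"
  proof (intro exI[of _ q] conjI allI impI)
    show "q > 0" by (rule q(1))
    fix x :: real assume x: "x \<noteq> 0 \<and> norm (x - 0) < q"
    then have b: "\<bar>\<phi> (t + x) - \<phi> t - x * D\<bar> \<le> r/2 * \<bar>x\<bar>" using q by auto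
    have "(\<phi> (t + x) - \<phi> t) / x - D = (\<phi> (t + x) - \<phi> t - x * D) / x" using x by (simp add: field_simps)
    then have "norm ((\<phi> (t + x) - \<phi> t) / x - D) = \<bar>\<phi> (t + x) - \<phi> t - x * D\<bar> / \<bar>x\<bar>" by (simp add: abs_divide)
    also have "\<dots> \<le> r/2" using b x by (simp add: divide_le_eq)
    also have "\<dots> < r" using r by simp
    finally show "norm ((\<phi> (t + x) - \<phi> t) / x - D) < r" .
  qed
qed

lemma has_real_derivative_vinner_grad_line:
  assumes td: "twice_diff d f" and x0: "x0 \<in> Rd d" and v: "v \<in> Rd d"
  defines "p \<equiv> \<lambda>t j. x0 j + t * v j"
  shows "((\<lambda>t. vinner d u (grad d f (p t))) has_real_derivative vinner d u (mv d (hess d f (p t)) v)) (at t)"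
proof (rule has_real_derivative_of_bound)
  fix e :: real assume e: "e > 0"
  have pR: "p t \<in> Rd d" using x0 v unfolding p_def Rd_def by auto
  let ?e' = "e / ((vnorm d u + 1) * (vnorm d v + 1))"
  have e': "?e' > 0" using e by (simp add: add_nonneg_pos)
  obtain r where r: "r > 0"
    "\<And>h. h \<in> Rd d \<Longrightarrow> vnorm d h < r \<Longrightarrow>
       vnorm d (grad d f (p t + h) - grad d f (p t) - mv d (hess d f (p t)) h) \<le> ?e' * vnorm d h"
  proof -
    have "has_jac d (grad d f) (hess d f (p t)) (p t)"
      using td pR unfolding twice_diff_def by (meson hess_jac)
    then show ?thesis using e' that unfolding has_jac_def by blast
  qed
  show "\<exists>r>0. \<forall>s. s \<noteq> 0 \<and> \<bar>s\<bar> < r \<longrightarrow>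
    \<bar>vinner d u (grad d f (p (t + s))) - vinner d u (grad d f (p t)) - s * vinner d u (mv d (hess d f (p t)) v)\<bar>
      \<le> e * \<bar>s\<bar>"
  proof (intro exI[of _ "r / (vnorm d v + 1)"] conjI allI impI)
    show "r / (vnorm d v + 1) > 0" using r by (simp add: add_nonneg_pos)
    fix s :: real assume s: "s \<noteq> 0 \<and> \<bar>s\<bar> < r / (vnorm d v + 1)"
    define h where "h = (\<lambda>j. s * v j)"
    have hR: "h \<in> Rd d" using v unfolding h_def Rd_def by auto
    have hn: "vnorm d h = \<bar>s\<bar> * vnorm d v" unfolding h_def by (rule vnorm_scale)
    have "\<bar>s\<bar> * vnorm d v \<le> \<bar>s\<bar> * (vnorm d v + 1)" by (simp add: mult_left_mono)
    also have "\<dots> < r" using s by (simp add: pos_less_divide_eq[symmetric] add_nonneg_pos mult.commute)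
    finally have hr: "vnorm d h < r" using hn by simp
    let ?w = "grad d f (p t + h) - grad d f (p t) - mv d (hess d f (p t)) h"
    have eq: "vinner d u (grad d f (p (t + s))) - vinner d u (grad d f (p t)) - s * vinner d u (mv d (hess d f (p t)) v)
        = vinner d u ?w"
    proof -
      have "p (t + s) = p t + h" unfolding p_def h_def by (simp add: fun_eq_iff algebra_simps)
      moreover have "vinner d u (mv d (hess d f (p t)) h) = s * vinner d u (mv d (hess d f (p t)) v)"
        unfolding h_def mv_scale_vec by (rule vinner_scale)
      ultimately show ?thesis by (simp add: vinner_diff)
    qed
    have "\<bar>vinner d u ?w\<bar> \<le> vnorm d u * vnorm d ?w" by (rule abs_vinner_le)
    also have "\<dots> \<le> vnorm d u * (?e' * (\<bar>s\<bar> * vnorm d v))"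
      using r(2)[OF hR hr] unfolding hn by (rule mult_left_mono) simp
    also have "\<dots> = vnorm d u * vnorm d v / ((vnorm d u + 1) * (vnorm d v + 1)) * (e * \<bar>s\<bar>)"
      by simp
    also have "\<dots> \<le> e * \<bar>s\<bar>"
      using e by (intro mult_left_le_one_le mult_nonneg_nonneg)
        (auto simp: divide_le_eq_1 add_nonneg_pos intro!: mult_mono)
    finally show "\<bar>vinner d u (grad d f (p (t + s))) - vinner d u (grad d f (p t))
        - s * vinner d u (mv d (hess d f (p t)) v)\<bar> \<le> e * \<bar>s\<bar>" unfolding eq .
  qed
qed

text \<open>Mean value theorem for \<open>t \<mapsto> \<langle>u, \<nabla>f(xt + t(x - xt))\<rangle>\<close>, with \<open>u\<close> the remainder itself.\<close>

lemma vnorm_grad_taylor_remainder_le: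
  assumes td: "twice_diff d f" and lh: "lipschitz_hess d L f" and x: "x \<in> Rd d" and xt: "xt \<in> Rd d"
  shows "vnorm d (grad d f x - grad d f xt - mv d (hess d f xt) (x - xt)) \<le> L * (vnorm d (x - xt))^2"
proof -
  define v where "v = x - xt"
  define u where "u = grad d f x - grad d f xt - mv d (hess d f xt) v"
  define p where "p t = (\<lambda>j. xt j + t * v j)" for t :: real
  have v: "v \<in> Rd d" using x xt unfolding v_def Rd_def by auto
  have pR: "p t \<in> Rd d" for t using xt v unfolding p_def Rd_def by auto
  have Lv: "0 \<le> L * vnorm d v"
    using lh x xt unfolding lipschitz_hess_def v_def by (meson order_trans specnorm_nonneg)
  have "((\<lambda>t. vinner d u (grad d f (p t))) has_real_derivative vinner d u (mv d (hess d f (p t)) v)) (at t)"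
    for t unfolding p_def by (rule has_real_derivative_vinner_grad_line[OF td xt v])
  then obtain z where z: "0 < z" "z < 1"
    "vinner d u (grad d f (p 1)) - vinner d u (grad d f (p 0)) = (1 - 0) * vinner d u (mv d (hess d f (p z)) v)"
    using MVT2[of 0 1 "\<lambda>t. vinner d u (grad d f (p t))" "\<lambda>t. vinner d u (mv d (hess d f (p t)) v)"] by auto
  have "p 0 = xt" "p 1 = x" unfolding p_def v_def by (simp_all add: fun_eq_iff)
  then have "(vnorm d u)^2 = vinner d u (mv d (hess d f (p z) - hess d f xt) v)"
    using z(3) by (simp add: vinner_self[symmetric] mv_diff vinner_diff u_def)
  also have "\<dots> \<le> vnorm d u * (specnorm d (hess d f (p z) - hess d f xt) * vnorm d v)"
    by (rule order_trans[OF vinner_le]) (simp add: mult_left_mono vnorm_mv_le)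
  also have "\<dots> \<le> vnorm d u * (L * (z * vnorm d v) * vnorm d v)"
  proof -
    have "p z - xt = (\<lambda>j. z * v j)" unfolding p_def by (simp add: fun_eq_iff)
    then have "vnorm d (p z - xt) = z * vnorm d v" using z(1) by (simp add: vnorm_scale)
    then have "specnorm d (hess d f (p z) - hess d f xt) \<le> L * (z * vnorm d v)"
      using lh pR xt unfolding lipschitz_hess_def by metis
    then show ?thesis by (intro mult_left_mono mult_right_mono) auto
  qed
  also have "\<dots> \<le> vnorm d u * (L * vnorm d v * vnorm d v)"
  proof -
    have "L * vnorm d v * z \<le> L * vnorm d v" using Lv z by (simp add: mult_left_le)
    then have "L * (z * vnorm d v) \<le> L * vnorm d v" by (simp add: ac_simps)
    then show ?thesis by (rule mult_left_mono[OF mult_right_mono]) auto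
  qed
  finally have main: "(vnorm d u)^2 \<le> vnorm d u * (L * (vnorm d v)^2)"
    by (simp add: power2_eq_square ac_simps)
  have "vnorm d u \<le> L * (vnorm d v)^2"
  proof (cases "vnorm d u = 0")
    case True
    then show ?thesis using Lv by (simp add: power2_eq_square mult.assoc[symmetric])
  next
    case False
    then have "vnorm d u > 0" using vnorm_nonneg[of d u] by linarith
    then show ?thesis using main by (simp add: power2_eq_square)
  qed
  then show ?thesis unfolding u_def v_def .
qed

section \<open>The minibatch errors\<close>

lemma grad_average:
  assumes td: "\<And>k. k < m \<Longrightarrow> twice_diff d (F k)" and y: "y \<in> Rd d"
  shows "grad d (\<lambda>z. (\<Sum>k<m. F k z) / real m) y = (\<lambda>j. (\<Sum>k<m. grad d (F k) y j) / real m)"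
proof -
  have hg: "has_grad d (F k) (grad d (F k) y) y" if "k < m" for k
    using td[OF that] y unfolding twice_diff_def by (meson has_grad_grad)
  have hga: "has_grad d (\<lambda>z. (\<Sum>k<m. F k z) / real m) (\<lambda>j. (\<Sum>k<m. grad d (F k) y j) / real m) y"
    by (rule has_grad_average) (rule hg)
  show ?thesis
  proof (rule ext)
    fix j
    show "grad d (\<lambda>z. (\<Sum>k<m. F k z) / real m) y j = (\<Sum>k<m. grad d (F k) y j) / real m"
    proof (cases "j < d")
      case True then show ?thesis using grad_eq[OF hga True] by simp
    next
      case False then show ?thesis by (simp add: grad_out)
    qed
  qed
qed

lemma hess_average:
  assumes td: "\<And>k. k < m \<Longrightarrow> twice_diff d (F k)" and y: "y \<in> Rd d"
  shows "meq d (hess d (\<lambda>z. (\<Sum>k<m. F k z) / real m) y) (\<lambda>i j. (\<Sum>k<m. hess d (F k) y i j) / real m)"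
proof -
  have hj: "has_jac d (grad d (F k)) (hess d (F k) y) y" if "k < m" for k
    using td[OF that] y unfolding twice_diff_def by (meson hess_jac)
  have hj2: "has_jac d (\<lambda>z j. (\<Sum>k<m. grad d (F k) z j) / real m) (\<lambda>i j. (\<Sum>k<m. hess d (F k) y i j) / real m) y"
    by (rule has_jac_average) (rule hj)
  have eqf: "(\<lambda>z j. (\<Sum>k<m. grad d (F k) z j) / real m) z = grad d (\<lambda>z. (\<Sum>k<m. F k z) / real m) z"
    if "z \<in> Rd d" for z
    using grad_average[OF td that] by simp
  have "has_jac d (grad d (\<lambda>z. (\<Sum>k<m. F k z) / real m)) (\<lambda>i j. (\<Sum>k<m. hess d (F k) y i j) / real m) y"
    by (rule has_jac_cong_fun[where G="\<lambda>z j. (\<Sum>k<m. grad d (F k) z j) / real m", OF y eqf hj2])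
  then show ?thesis by (rule hess_eq)
qed

lemma mv_average: "mv d (\<lambda>i j. (\<Sum>k<m. H k i j) / real m) v = (\<lambda>i. (\<Sum>k<m. mv d (H k) v i) / real m)"
proof (rule ext)
  fix i
  show "mv d (\<lambda>i j. (\<Sum>k<m. H k i j) / real m) v i = (\<Sum>k<m. mv d (H k) v i) / real m"
  proof (cases "i < d")
    case True
    have "(\<Sum>j<d. (\<Sum>k<m. H k i j) / real m * v j) = (\<Sum>j<d. (\<Sum>k<m. H k i j * v j) / real m)"
      by (intro sum.cong refl) (simp add: sum_distrib_right)
    also have "\<dots> = (\<Sum>j<d. \<Sum>k<m. H k i j * v j) / real m" by (rule sum_divide_distrib[symmetric])
    also have "\<dots> = (\<Sum>k<m. \<Sum>j<d. H k i j * v j) / real m" by (subst sum.swap) (rule refl)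
    finally have "(\<Sum>j<d. (\<Sum>k<m. H k i j) / real m * v j) = (\<Sum>k<m. \<Sum>j<d. H k i j * v j) / real m" .
    then show ?thesis using True unfolding mv_def by simp
  next
    case False then show ?thesis unfolding mv_def by simp
  qed
qed

lemma batches_mem: "B \<in> batches n b \<Longrightarrow> k < b \<Longrightarrow> B k < n"
  unfolding batches_def by auto

lemma mv_cong_mat: "meq d A B \<Longrightarrow> mv d A v = mv d B v"
  by (rule mv_cong) auto

lemma calG_minus_grad_coord:
  fixes fs :: "nat \<Rightarrow> vec \<Rightarrow> real"
  assumes b: "b \<ge> 1" and tdi: "\<And>i. i < n \<Longrightarrow> twice_diff d (fs i)"
    and x: "x \<in> Rd d" and xt: "xt \<in> Rd d" and B: "B \<in> batches n b" and j: "j < d"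
  defines "a \<equiv> \<lambda>i. grad d (fs i) x - grad d (fs i) xt - mv d (hess d (fs i) xt) (x - xt)"
  shows "(calG d (favg n fs) (hB b fs B) x xt - grad d (favg n fs) x) j
       = (\<Sum>k<b. a (B k) j - (\<Sum>i<n. a i j) / real n) / real b"
proof -
  let ?v = "x - xt"
  have tdB: "twice_diff d (fs (B k))" if "k < b" for k using tdi batches_mem[OF B that] by blast
  have fdef: "favg n fs = (\<lambda>y. (\<Sum>i<n. fs i y) / real n)" unfolding favg_def ..
  have hdef: "hB b fs B = (\<lambda>y. (\<Sum>k<b. fs (B k) y) / real b)" unfolding hB_def ..
  have gf: "grad d (favg n fs) y = (\<lambda>j. (\<Sum>i<n. grad d (fs i) y j) / real n)" if "y \<in> Rd d" for y
    unfolding fdef by (rule grad_average[where F=fs and m=n, OF tdi that])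
  have gh: "grad d (hB b fs B) y = (\<lambda>j. (\<Sum>k<b. grad d (fs (B k)) y j) / real b)" if "y \<in> Rd d" for y
    unfolding hdef by (rule grad_average[where F="\<lambda>k. fs (B k)" and m=b, OF tdB that])
  have mf: "mv d (hess d (favg n fs) xt) ?v = (\<lambda>i. (\<Sum>c<n. mv d (hess d (fs c) xt) ?v i) / real n)"
  proof -
    have "mv d (hess d (favg n fs) xt) ?v = mv d (\<lambda>i j. (\<Sum>c<n. hess d (fs c) xt i j) / real n) ?v"
      unfolding fdef by (rule mv_cong_mat[OF hess_average[where F=fs and m=n, OF tdi xt]])
    then show ?thesis by (simp add: mv_average)
  qed
  have mh: "mv d (hess d (hB b fs B) xt) ?v = (\<lambda>i. (\<Sum>k<b. mv d (hess d (fs (B k)) xt) ?v i) / real b)"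
  proof -
    have "mv d (hess d (hB b fs B) xt) ?v = mv d (\<lambda>i j. (\<Sum>k<b. hess d (fs (B k)) xt i j) / real b) ?v"
      unfolding hdef by (rule mv_cong_mat[OF hess_average[where F="\<lambda>k. fs (B k)" and m=b, OF tdB xt]])
    then show ?thesis by (simp add: mv_average)
  qed
  have bp: "real b > 0" using b by simp
  have "(calG d (favg n fs) (hB b fs B) x xt - grad d (favg n fs) x) j
      = (\<Sum>k<b. grad d (fs (B k)) x j) / real b - (\<Sum>k<b. grad d (fs (B k)) xt j) / real b
        + (\<Sum>i<n. grad d (fs i) xt j) / real n
        + ((\<Sum>c<n. mv d (hess d (fs c) xt) ?v j) / real n - (\<Sum>k<b. mv d (hess d (fs (B k)) xt) ?v j) / real b)
        - (\<Sum>i<n. grad d (fs i) x j) / real n"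
    unfolding calG_def by (simp add: gf[OF x] gf[OF xt] gh[OF x] gh[OF xt] mv_diff mf mh)
  also have "\<dots> = (\<Sum>k<b. a (B k) j) / real b - (\<Sum>i<n. a i j) / real n"
    unfolding a_def by (simp add: sum_subtractf diff_divide_distrib)
  also have "\<dots> = (\<Sum>k<b. a (B k) j - (\<Sum>i<n. a i j) / real n) / real b"
    using bp by (simp add: sum_subtractf diff_divide_distrib)
  finally show ?thesis .
qed

lemma calH_minus_hess_eq:
  fixes fs :: "nat \<Rightarrow> vec \<Rightarrow> real"
  assumes b: "b \<ge> 1" and tdi: "\<And>i. i < n \<Longrightarrow> twice_diff d (fs i)"
    and x: "x \<in> Rd d" and xt: "xt \<in> Rd d" and B: "B \<in> batches n b"
  defines "M \<equiv> \<lambda>c. hess d (fs c) x - hess d (fs c) xt"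
  defines "Y \<equiv> \<lambda>c i j. M c i j - (\<Sum>c<n. M c i j) / real n"
  shows "meq d (calH d (favg n fs) (hB b fs B) x xt - hess d (favg n fs) x) (\<lambda>i j. (1 / real b) * batch_sum Y b B i j)"
  unfolding meq_def
proof (intro allI impI)
  fix i j assume i: "i < d" and j: "j < d"
  have tdB: "twice_diff d (fs (B k))" if "k < b" for k using tdi batches_mem[OF B that] by blast
  have fdef: "favg n fs = (\<lambda>y. (\<Sum>i<n. fs i y) / real n)" unfolding favg_def ..
  have hdef: "hB b fs B = (\<lambda>y. (\<Sum>k<b. fs (B k) y) / real b)" unfolding hB_def ..
  have hf: "hess d (favg n fs) y i j = (\<Sum>c<n. hess d (fs c) y i j) / real n" if "y \<in> Rd d" for y
  proof -
    have hm: "meq d (hess d (\<lambda>y. (\<Sum>i<n. fs i y) / real n) y) (\<lambda>i j. (\<Sum>k<n. hess d (fs k) y i j) / real n)"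
      by (rule hess_average) (auto intro: tdi that)
    show ?thesis unfolding fdef using hm i j unfolding meq_def by blast
  qed
  have hh: "hess d (hB b fs B) y i j = (\<Sum>k<b. hess d (fs (B k)) y i j) / real b" if "y \<in> Rd d" for y
  proof -
    have hm: "meq d (hess d (\<lambda>y. (\<Sum>k<b. fs (B k) y) / real b) y) (\<lambda>i j. (\<Sum>k<b. hess d (fs (B k)) y i j) / real b)"
      by (rule hess_average) (auto intro: tdB that)
    show ?thesis unfolding hdef using hm i j unfolding meq_def by blast
  qed
  have bp: "real b > 0" using b by simp
  have "(calH d (favg n fs) (hB b fs B) x xt - hess d (favg n fs) x) i j
     = (\<Sum>k<b. hess d (fs (B k)) x i j) / real b - (\<Sum>k<b. hess d (fs (B k)) xt i j) / real b
       + (\<Sum>c<n. hess d (fs c) xt i j) / real n - (\<Sum>c<n. hess d (fs c) x i j) / real n"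
    unfolding calH_def by (simp add: hf[OF x] hf[OF xt] hh[OF x] hh[OF xt])
  also have "\<dots> = (\<Sum>k<b. M (B k) i j) / real b - (\<Sum>c<n. M c i j) / real n"
    unfolding M_def by (simp add: sum_subtractf diff_divide_distrib)
  also have "\<dots> = (1 / real b) * (\<Sum>k<b. Y (B k) i j)"
    unfolding Y_def using bp by (simp add: sum_subtractf diff_divide_distrib)
  also have "(\<Sum>k<b. Y (B k) i j) = batch_sum Y b B i j"
    unfolding batch_sum_def by (simp add: msum_apply)
  finally show "(calH d (favg n fs) (hB b fs B) x xt - hess d (favg n fs) x) i j = (1 / real b) * batch_sum Y b B i j" .
qed

lemma EB_calG_error_le:
  fixes fs :: "nat \<Rightarrow> vec \<Rightarrow> real"
  assumes n: "1 \<le> n" and b: "1 \<le> b"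
    and tdi: "\<And>i. i < n \<Longrightarrow> twice_diff d (fs i)" and lhi: "\<And>i. i < n \<Longrightarrow> lipschitz_hess d L (fs i)"
    and x: "x \<in> Rd d" and xt: "xt \<in> Rd d" and L0: "0 \<le> L"
  shows "EB n b (\<lambda>B. vnorm d (calG d (favg n fs) (hB b fs B) x xt - grad d (favg n fs) x) powr (3/2))
         \<le> (L / sqrt (real b)) powr (3/2) * vnorm d (x - xt) ^ 3"
proof -
  define a where "a = (\<lambda>i. grad d (fs i) x - grad d (fs i) xt - mv d (hess d (fs i) xt) (x - xt))"
  define z where "z = (\<lambda>c j. a c j - (\<Sum>i<n. a i j) / real n)"
  let ?r = "vnorm d (x - xt)"
  have np: "0 < n" using n by simp
  have key: "vnorm d (calG d (favg n fs) (hB b fs B) x xt - grad d (favg n fs) x)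
           = vnorm d (\<lambda>j. (\<Sum>k<b. z (B k) j) / real b)" if B: "B \<in> batches n b" for B
  proof (rule vnorm_cong)
    fix j assume j: "j < d"
    show "(calG d (favg n fs) (hB b fs B) x xt - grad d (favg n fs) x) j = (\<Sum>k<b. z (B k) j) / real b"
      using calG_minus_grad_coord[where fs=fs and n=n, OF b tdi x xt B j] unfolding z_def a_def .
  qed
  have abd: "vnorm d (a i) \<le> L * ?r^2" if "i < n" for i
    unfolding a_def by (rule vnorm_grad_taylor_remainder_le[OF tdi[OF that] lhi[OF that] x xt])
  have Z0: "(\<Sum>c<n. z c j) = 0" for j
    unfolding z_def using np by (simp add: sum_subtractf)
  have K: "(\<Sum>c<n. (vnorm d (z c))^2) \<le> real n * (L * ?r^2)^2"
  proof -
    have "(\<Sum>c<n. (vnorm d (z c))^2) \<le> (\<Sum>c<n. (vnorm d (a c))^2)"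
      unfolding z_def by (rule sum_vnorm_sq_centred_le[OF np])
    also have "\<dots> \<le> (\<Sum>c<n. (L * ?r^2)^2)"
      by (intro sum_mono power_mono abd) auto
    finally show ?thesis by simp
  qed
  have K0: "L * ?r^2 \<ge> 0" using L0 by simp
  have "EB n b (\<lambda>B. vnorm d (calG d (favg n fs) (hB b fs B) x xt - grad d (favg n fs) x) powr (3/2))
      = EB n b (\<lambda>B. vnorm d (\<lambda>j. (\<Sum>k<b. z (B k) j) / real b) powr (3/2))"
    by (intro EB_cong) (simp add: key)
  also have "\<dots> \<le> (L * ?r^2 / sqrt (real b)) powr (3/2)"
    by (rule EB_vnorm_batch_mean_powr_three_halves[OF np b Z0 K K0])
  also have "(L * ?r^2 / sqrt (real b)) = (L / sqrt (real b)) * ?r^2" by simp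
  also have "((L / sqrt (real b)) * ?r^2) powr (3/2) = (L / sqrt (real b)) powr (3/2) * (?r^2) powr (3/2)"
    by (rule powr_mult)
  also have "(?r^2) powr (3/2) = ?r^3"
    by (simp add: powr_three_halves)
  finally show ?thesis .
qed

lemma hess_error_bound_rescale:
  fixes b :: nat and L r l :: real
  assumes b: "b \<ge> 1" and L0: "L \<ge> 0" and r0: "r \<ge> 0" and l: "l \<ge> 0"
  shows "(1 / real b)^3 * (2 * sqrt (24 * exp 2 * l * real b * (2 * L * r)^2) ^ 3)
       = 16 * sqrt (24 * exp 2) ^ 3 * (sqrt l * L / sqrt (real b)) ^ 3 * r ^ 3"
proof -
  define s where "s = sqrt (real b)"
  have sp: "s > 0" unfolding s_def using b by simp
  have bs: "real b = s^2" unfolding s_def by simp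
  have "sqrt (24 * exp 2 * l * real b * (2 * L * r)^2) = sqrt (24 * exp 2) * sqrt l * s * (2 * L * r)"
    unfolding s_def using L0 r0 by (simp add: real_sqrt_mult)
  then have "(1 / real b)^3 * (2 * sqrt (24 * exp 2 * l * real b * (2 * L * r)^2) ^ 3)
      = (1 / s^2)^3 * (2 * (sqrt (24 * exp 2) * sqrt l * s * (2 * L * r)) ^ 3)" unfolding bs by simp
  also have "\<dots> = 16 * sqrt (24 * exp 2) ^ 3 * (sqrt l * L / s) ^ 3 * r ^ 3"
    using sp by (simp add: field_simps power_mult_distrib)
  finally show ?thesis unfolding s_def .
qed

lemma specnorm_sub_mean_le:
  assumes n: "0 < n" and M: "\<And>c. c < n \<Longrightarrow> specnorm d (M c) \<le> R" and c: "c < n"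
  shows "specnorm d (\<lambda>i j. M c i j - (\<Sum>c<n. M c i j) / real n) \<le> 2 * R"
proof -
  let ?Mb = "\<lambda>i j. (1 / real n) * (\<Sum>c<n. M c) i j"
  have "(\<lambda>i j. M c i j - (\<Sum>c<n. M c i j) / real n) = M c - ?Mb"
    by (simp add: fun_eq_iff msum_apply)
  then have "specnorm d (\<lambda>i j. M c i j - (\<Sum>c<n. M c i j) / real n) \<le> specnorm d (M c) + specnorm d ?Mb"
    using specnorm_diff by simp
  also have "specnorm d ?Mb \<le> (1 / real n) * (\<Sum>c<n. specnorm d (M c))"
    using specnorm_scale[of d "1 / real n" "\<Sum>c<n. M c"] specnorm_sum[of d M "{..<n}"]
    by (simp add: divide_right_mono)
  also have "\<dots> \<le> (1 / real n) * (\<Sum>c<n. R)"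
    by (intro mult_left_mono sum_mono M) auto
  finally show ?thesis using M[OF c] n by simp
qed

lemma EB_calH_error_le:
  fixes fs :: "nat \<Rightarrow> vec \<Rightarrow> real"
  assumes d: "2 \<le> d" and n: "1 \<le> n" and b: "1 \<le> b"
    and tdi: "\<And>i. i < n \<Longrightarrow> twice_diff d (fs i)" and lhi: "\<And>i. i < n \<Longrightarrow> lipschitz_hess d L (fs i)"
    and x: "x \<in> Rd d" and xt: "xt \<in> Rd d" and L0: "0 \<le> L"
  shows "EB n b (\<lambda>B. specnorm d (calH d (favg n fs) (hB b fs B) x xt - hess d (favg n fs) x) ^ 3)
         \<le> 16 * sqrt (24 * exp 2) ^ 3 * (sqrt (ln (real d)) * L / sqrt (real b)) ^ 3 * vnorm d (x - xt) ^ 3"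
proof -
  define M where "M = (\<lambda>c. hess d (fs c) x - hess d (fs c) xt)"
  define Y where "Y = (\<lambda>c i j. M c i j - (\<Sum>c<n. M c i j) / real n)"
  let ?r = "vnorm d (x - xt)"
  have np: "0 < n" using n by simp
  have bp: "real b > 0" using b by simp
  have key: "specnorm d (calH d (favg n fs) (hB b fs B) x xt - hess d (favg n fs) x) = (1 / real b) * specnorm d (batch_sum Y b B)"
    if B: "B \<in> batches n b" for B
  proof -
    have "meq d (calH d (favg n fs) (hB b fs B) x xt - hess d (favg n fs) x) (\<lambda>i j. (1 / real b) * batch_sum Y b B i j)"
      using calH_minus_hess_eq[where fs=fs and n=n, OF b tdi x xt B] unfolding Y_def M_def .
    then have "specnorm d (calH d (favg n fs) (hB b fs B) x xt - hess d (favg n fs) x) = specnorm d (\<lambda>i j. (1 / real b) * batch_sum Y b B i j)"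
      by (rule specnorm_cong)
    also have "\<dots> = (1 / real b) * specnorm d (batch_sum Y b B)" using specnorm_scale[of d "1 / real b" "batch_sum Y b B"] bp by simp
    finally show ?thesis .
  qed
  have Y0: "meq d (\<Sum>c<n. Y c) (\<lambda>_ _. 0)"
    unfolding meq_def Y_def using np by (simp add: msum_apply sum_subtractf)
  have "specnorm d (M c) \<le> L * ?r" if "c < n" for c
    using lhi[OF that] x xt unfolding lipschitz_hess_def M_def by blast
  then have YR: "specnorm d (Y c) \<le> 2 * L * ?r" if "c < n" for c
    using specnorm_sub_mean_le[OF np _ that] unfolding Y_def by (simp add: mult.assoc)
  have "EB n b (\<lambda>B. specnorm d (calH d (favg n fs) (hB b fs B) x xt - hess d (favg n fs) x) ^ 3)
      = EB n b (\<lambda>B. (1 / real b)^3 * specnorm d (batch_sum Y b B) ^ 3)"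
    by (intro EB_cong) (simp add: key power_divide)
  also have "\<dots> = (1 / real b)^3 * EB n b (\<lambda>B. specnorm d (batch_sum Y b B) ^ 3)" by (rule EB_cmult)
  also have "\<dots> \<le> (1 / real b)^3 * (2 * sqrt (24 * exp 2 * ln (real d) * real b * (2 * L * ?r)^2) ^ 3)"
  proof -
    have mt: "EB n b (\<lambda>B. specnorm d (batch_sum Y b B) ^ 3) \<le> 2 * sqrt (24 * exp 2 * ln (real d) * real b * (2 * L * ?r)^2) ^ 3"
      by (rule EB_specnorm_batch_sum_cube_le[OF np Y0 _ b d]) (erule YR)
    show ?thesis by (rule mult_left_mono[OF mt]) simp
  qed
  also have "\<dots> = 16 * sqrt (24 * exp 2) ^ 3 * (sqrt (ln (real d)) * L / sqrt (real b)) ^ 3 * ?r ^ 3"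
    using d by (intro hess_error_bound_rescale[OF b L0]) auto
  finally show ?thesis .
qed

lemma lipschitz_hess_nonneg:
  assumes "lipschitz_hess d L f" and "1 \<le> d"
  shows "0 \<le> L"
proof -
  have "specnorm d (hess d f (unit_vec 0 1) - hess d f (\<lambda>_. 0)) \<le> L * vnorm d (unit_vec 0 1 - (\<lambda>_. 0))"
    using assms unit_vec_Rd[of 0 d 1] unfolding lipschitz_hess_def by simp
  moreover have "vnorm d (unit_vec 0 1 - (\<lambda>_. 0)) = 1"
    using vnorm_unit_vec[of 0 d 1] assms(2) by (simp add: fun_diff_def)
  ultimately have "specnorm d (hess d f (unit_vec 0 1) - hess d f (\<lambda>_. 0)) \<le> L" by simp
  then show ?thesis using specnorm_nonneg order_trans by blast
qed

theorem mainTheorem6: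
  shows "\<exists>C::real. \<forall>(d::nat) (n::nat) (b::nat) (L::real) (fs :: nat \<Rightarrow> vec \<Rightarrow> real).
    d \<ge> 2 \<and> n \<ge> 1 \<and> b \<ge> 1 \<and>
    (\<forall>i<n. twice_diff d (fs i) \<and> lipschitz_hess d L (fs i)) \<longrightarrow>
    (\<forall>x\<in>Rd d. \<forall>xt\<in>Rd d.
       EB n b (\<lambda>B. vnorm d (calG d (favg n fs) (hB b fs B) x xt - grad d (favg n fs) x) powr (3/2))
         \<le> (L / sqrt (real b)) powr (3/2) * vnorm d (x - xt) ^ 3
     \<and> EB n b (\<lambda>B. specnorm d (calH d (favg n fs) (hB b fs B) x xt - hess d (favg n fs) x) ^ 3)
         \<le> C * (sqrt (ln (real d)) * L / sqrt (real b)) ^ 3 * vnorm d (x - xt) ^ 3)"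
proof (intro exI[of _ "16 * sqrt (24 * exp 2) ^ 3"] allI impI ballI conjI)
  fix d n b :: nat and L :: real and fs :: "nat \<Rightarrow> vec \<Rightarrow> real" and x xt :: vec
  assume "d \<ge> 2 \<and> n \<ge> 1 \<and> b \<ge> 1 \<and> (\<forall>i<n. twice_diff d (fs i) \<and> lipschitz_hess d L (fs i))"
    and x: "x \<in> Rd d" and xt: "xt \<in> Rd d"
  then have d: "2 \<le> d" and n: "1 \<le> n" and b: "1 \<le> b"
    and td: "\<And>i. i < n \<Longrightarrow> twice_diff d (fs i)" and lh: "\<And>i. i < n \<Longrightarrow> lipschitz_hess d L (fs i)"
    by auto
  have L: "0 \<le> L" using lipschitz_hess_nonneg[OF lh[of 0]] n d by simp
  show "EB n b (\<lambda>B. vnorm d (calG d (favg n fs) (hB b fs B) x xt - grad d (favg n fs) x) powr (3/2))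
      \<le> (L / sqrt (real b)) powr (3/2) * vnorm d (x - xt) ^ 3"
    by (rule EB_calG_error_le[OF n b td lh x xt L])
  show "EB n b (\<lambda>B. specnorm d (calH d (favg n fs) (hB b fs B) x xt - hess d (favg n fs) x) ^ 3)
      \<le> 16 * sqrt (24 * exp 2) ^ 3 * (sqrt (ln (real d)) * L / sqrt (real b)) ^ 3 * vnorm d (x - xt) ^ 3"
    by (rule EB_calH_error_le[OF d n b td lh x xt L])
qed

end
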